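(* For every $d\in\mathbb{N}$ there is a constant $C_d>0$ depending only on $d$ such that the following holds. Let $p\ge1$, let $n>16d^2$, let $X\sim\mathrm{Uniform}(B_{p,n})$, and let $f:\mathbb{R}^n\to\mathbb{R}$ be a homogeneous polynomial of degree $d$. Then \[\mathbb{E}[f^2(X)]\ge C_d\,n^{-2d/p}\,\mathrm{coeff}_d^2(f).\]
   Context: $B_{p,n}=\{x\in\mathbb{R}^n:\|x\|_p\le1\}$ with $\|x\|_p=(\sum_i|x_i|^p)^{1/p}$ (the non-normalized unit $L_p$ ball). For $f(x)=\sum_{|I|=d}\alpha_Ix^I$ in multi-index notation, $\mathrm{coeff}_d(f)=\sqrt{\sum_{|I|=d}\alpha_I^2}$. *)

theory Defs
  imports "HOL-Probability.Probability"
begin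

text \<open>Points of R^n are functions on {..<n} (extensional), with the product Lebesgue measure.\<close>
definition Rn_measure :: "nat \<Rightarrow> (nat \<Rightarrow> real) measure" where
  "Rn_measure n = (\<Pi>\<^sub>M i\<in>{..<n}. lborel)"

definition lp_norm :: "nat \<Rightarrow> real \<Rightarrow> (nat \<Rightarrow> real) \<Rightarrow> real" where
  "lp_norm n p x = (\<Sum>i<n. \<bar>x i\<bar> powr p) powr (1 / p)"

definition lp_ball :: "nat \<Rightarrow> real \<Rightarrow> (nat \<Rightarrow> real) set" where
  "lp_ball n p = {x \<in> space (Rn_measure n). lp_norm n p x \<le> 1}"

definition multi_idx :: "nat \<Rightarrow> nat \<Rightarrow> (nat \<Rightarrow> nat) set" where
  "multi_idx n d = {I. (\<forall>i\<ge>n. I i = 0) \<and> (\<Sum>i<n. I i) = d}"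

definition hom_poly :: "nat \<Rightarrow> nat \<Rightarrow> ((nat \<Rightarrow> nat) \<Rightarrow> real) \<Rightarrow> (nat \<Rightarrow> real) \<Rightarrow> real" where
  "hom_poly n d \<alpha> x = (\<Sum>I\<in>multi_idx n d. \<alpha> I * (\<Prod>i<n. x i ^ I i))"

definition coeff_d :: "nat \<Rightarrow> nat \<Rightarrow> ((nat \<Rightarrow> nat) \<Rightarrow> real) \<Rightarrow> real" where
  "coeff_d n d \<alpha> = sqrt (\<Sum>I\<in>multi_idx n d. (\<alpha> I)\<^sup>2)"

end

theory Submission
  imports Defs "HOL-Computational_Algebra.Fundamental_Theorem_Algebra"
begin

(*
  Let Z = int exp(-|t|^p) dt. Integrating over the level sets of N(x) = sum |x_i|^p (layer cake)
  and using that f^2 is homogeneous of degree 2d gives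
    int f^2 exp(-N) = Gamma((n+2d)/p + 1) * int_B f^2   and   Z^n = Gamma(n/p + 1) * vol B,
  so the uniform mean of f^2 on B = B_{p,n} is Gamma(n/p+1)/Gamma((n+2d)/p+1) times its mean under
  the product density prod_i exp(-|x_i|^p)/Z. Log-convexity of Gamma bounds this ratio of Gamma
  values below by n^(-2d/p)/16^d once d <= n.

  The product mean is bounded below one coordinate at a time. In one variable, a monic polynomial
  of degree j <= d is at least (2(j+1))^(-j) in absolute value on a subset of [-1,1] of measure
  at least 1, so its mean square is at least a constant c_d. Expanding in the monic orthogonal
  polynomials of the density turns this into a lower bound of triangular form, and that form
  survives the induction over the coordinates: a polynomial of degree at most D has mean square
  at least c_d^D times the sum of squares of its top-degree coefficients.
*)

section \<open>The density exp(-|y|^p)/Z\<close>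

lemma nn_integral_abs_pow_exp_neg_abs_le:
  "(\<integral>\<^sup>+ y. ennreal (\<bar>y\<bar> ^ k * exp (- \<bar>y\<bar>)) \<partial>lborel) \<le> ennreal (2 * Gamma (real k + 1))"
proof -
  define g where "g t = ennreal (\<bar>t\<bar> ^ k * exp (- \<bar>t\<bar>))" for t :: real
  have [measurable]: "g \<in> borel_measurable borel" unfolding g_def by measurable
  have pos: "(\<integral>\<^sup>+ t. g t * indicator {0..} t \<partial>lborel) = ennreal (Gamma (real k + 1))"
  proof -
    have "(\<integral>\<^sup>+ t. g t * indicator {0..} t \<partial>lborel)
        = (\<integral>\<^sup>+ t. ennreal (indicator {0..} t * t powr (real k + 1 - 1) / exp t) \<partial>lborel)"
      unfolding g_def
      by (intro nn_integral_cong_AE, use AE_lborel_singleton[of 0] in eventually_elim)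
         (auto simp: indicator_def powr_realpow exp_minus field_simps)
    then show ?thesis using Gamma_conv_nn_integral_real[of "real k + 1"] by simp
  qed
  have neg: "(\<integral>\<^sup>+ t. g t * indicator {..0} t \<partial>lborel) = (\<integral>\<^sup>+ t. g t * indicator {0..} t \<partial>lborel)"
    using nn_integral_real_affine[of "\<lambda>t. g t * indicator {..0} t" "-1" 0]
    by (simp add: g_def indicator_def)
  have "(\<integral>\<^sup>+ y. g y \<partial>lborel) \<le> (\<integral>\<^sup>+ t. g t * indicator {..0} t + g t * indicator {0..} t \<partial>lborel)"
    by (intro nn_integral_mono) (auto simp: indicator_def)
  also have "\<dots> = ennreal (Gamma (real k + 1)) + ennreal (Gamma (real k + 1))"
    by (subst nn_integral_add) (auto simp: neg pos)
  finally show ?thesis by (simp add: g_def flip: ennreal_plus)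
qed

lemma nn_integral_abs_pow_exp_neg_powr_le:
  assumes p: "p \<ge> 1"
  shows "(\<integral>\<^sup>+ y. ennreal (\<bar>y\<bar> ^ k * exp (- (\<bar>y\<bar> powr p))) \<partial>lborel) \<le> ennreal (2 + 2 * Gamma (real k + 1))"
proof -
  have pointwise: "\<bar>y\<bar> ^ k * exp (- (\<bar>y\<bar> powr p)) \<le> indicator {-1..1} y + \<bar>y\<bar> ^ k * exp (- \<bar>y\<bar>)"
    for y :: real
  proof (cases "\<bar>y\<bar> \<le> 1")
    case True
    then have "\<bar>y\<bar> ^ k * exp (- (\<bar>y\<bar> powr p)) \<le> 1"
      by (intro mult_le_one) (auto simp: power_le_one)
    moreover have "0 \<le> \<bar>y\<bar> ^ k * exp (- \<bar>y\<bar>)" by simp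
    moreover have "indicator {-1..1} y = (1::real)" using True by (auto simp: indicator_def abs_le_iff)
    ultimately show ?thesis by linarith
  next
    case False
    have "\<bar>y\<bar> powr 1 \<le> \<bar>y\<bar> powr p" using False p by (intro powr_mono) auto
    then have "\<bar>y\<bar> ^ k * exp (- (\<bar>y\<bar> powr p)) \<le> \<bar>y\<bar> ^ k * exp (- \<bar>y\<bar>)"
      using False by (intro mult_left_mono) auto
    then show ?thesis by (simp add: indicator_def)
  qed
  have "(\<integral>\<^sup>+ y. ennreal (\<bar>y\<bar> ^ k * exp (- (\<bar>y\<bar> powr p))) \<partial>lborel) \<le>
      (\<integral>\<^sup>+ y. ennreal (indicator {-1..1} y) + ennreal (\<bar>y\<bar> ^ k * exp (- \<bar>y\<bar>)) \<partial>lborel)"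
    using pointwise by (intro nn_integral_mono) (simp flip: ennreal_plus)
  also have "\<dots> = 2 + (\<integral>\<^sup>+ y. ennreal (\<bar>y\<bar> ^ k * exp (- \<bar>y\<bar>)) \<partial>lborel)"
    by (subst nn_integral_add) (auto simp: ennreal_indicator)
  also have "\<dots> \<le> 2 + ennreal (2 * Gamma (real k + 1))"
    by (intro add_left_mono nn_integral_abs_pow_exp_neg_abs_le)
  finally show ?thesis using Gamma_real_pos[of "real k + 1"] by (subst ennreal_plus) auto
qed

lemma integrable_abs_pow_exp_neg_powr:
  assumes "p \<ge> 1"
  shows "integrable lborel (\<lambda>y::real. \<bar>y\<bar> ^ k * exp (- (\<bar>y\<bar> powr p)))"
proof (subst integrable_iff_bounded, intro conjI)
  show "(\<lambda>y::real. \<bar>y\<bar> ^ k * exp (- (\<bar>y\<bar> powr p))) \<in> borel_measurable lborel" by measurable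
  have "(\<integral>\<^sup>+ y. ennreal (norm (\<bar>y\<bar> ^ k * exp (- (\<bar>y\<bar> powr p)))) \<partial>lborel)
      \<le> ennreal (2 + 2 * Gamma (real k + 1))"
    using nn_integral_abs_pow_exp_neg_powr_le[OF assms] by simp
  then show "(\<integral>\<^sup>+ y. ennreal (norm (\<bar>y\<bar> ^ k * exp (- (\<bar>y\<bar> powr p)))) \<partial>lborel) < \<infinity>"
    by (simp add: le_less_trans)
qed

lemma integrable_poly_exp_neg_powr:
  assumes p: "p \<ge> 1"
  shows "integrable lborel (\<lambda>y::real. poly R y * exp (- (\<bar>y\<bar> powr p)))"
proof -
  have monomial: "integrable lborel (\<lambda>y::real. y ^ i * exp (- (\<bar>y\<bar> powr p)))" for i
    by (rule Bochner_Integration.integrable_bound[OF integrable_abs_pow_exp_neg_powr[OF p, of i]])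
       (auto simp: abs_mult power_abs)
  have "integrable lborel (\<lambda>y::real. \<Sum>i\<le>degree R. coeff R i * (y ^ i * exp (- (\<bar>y\<bar> powr p))))"
    by (simp add: monomial)
  then show ?thesis
    by (simp add: poly_altdef sum_distrib_right mult.assoc)
qed

definition pgauss_const :: "real \<Rightarrow> real" where
  "pgauss_const p = (\<integral>y. exp (- (\<bar>y\<bar> powr p)) \<partial>lborel)"

definition pgauss :: "real \<Rightarrow> real \<Rightarrow> real" where
  "pgauss p y = exp (- (\<bar>y\<bar> powr p)) / pgauss_const p"

lemma pgauss_measurable [measurable]: "pgauss p \<in> borel_measurable borel"
  unfolding pgauss_def by measurable

lemma nn_integral_exp_neg_powr:
  assumes "p \<ge> 1"
  shows "(\<integral>\<^sup>+ y. ennreal (exp (- (\<bar>y\<bar> powr p))) \<partial>lborel) = ennreal (pgauss_const p)"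
  unfolding pgauss_const_def
  by (rule nn_integral_eq_integral) (use integrable_abs_pow_exp_neg_powr[OF assms, of 0] in auto)

lemma pgauss_const_bounds:
  assumes p: "p \<ge> 1"
  shows "2 / exp 1 \<le> pgauss_const p" "pgauss_const p \<le> 4"
proof -
  have "ennreal (pgauss_const p) \<le> ennreal (2 + 2 * Gamma (real 0 + 1))"
    using nn_integral_abs_pow_exp_neg_powr_le[OF p, of 0] nn_integral_exp_neg_powr[OF p] by simp
  then show "pgauss_const p \<le> 4" using ennreal_le_iff[of 4 "pgauss_const p"] by simp
  have int: "integrable lborel (\<lambda>y::real. exp (- (\<bar>y\<bar> powr p)))"
    using integrable_abs_pow_exp_neg_powr[OF p, of 0] by simp
  have "(\<integral>(y::real). indicator {-1..1} y * exp (- 1) \<partial>lborel) \<le> pgauss_const p"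
    unfolding pgauss_const_def
  proof (rule Bochner_Integration.integral_mono[OF _ int])
    show "integrable lborel (\<lambda>y::real. indicator {-1..1} y * exp (- 1) :: real)"
      by (intro integrable_mult_left integrable_real_indicator) auto
    fix y :: real
    show "indicator {-1..1} y * exp (- 1) \<le> exp (- (\<bar>y\<bar> powr p))"
      using p powr_le1[of p "\<bar>y\<bar>"] by (auto simp: indicator_def abs_le_iff)
  qed
  then show "2 / exp 1 \<le> pgauss_const p" by (simp add: exp_minus field_simps)
qed

lemma pgauss_const_pos: "p \<ge> 1 \<Longrightarrow> pgauss_const p > 0"
  using pgauss_const_bounds(1)[of p] by (auto intro: less_le_trans[rotated])

lemma pgauss_nonneg: "p \<ge> 1 \<Longrightarrow> 0 \<le> pgauss p y"
  using pgauss_const_pos[of p] unfolding pgauss_def by simp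

lemma integral_pgauss: "p \<ge> 1 \<Longrightarrow> (\<integral>y. pgauss p y \<partial>lborel) = 1"
  using pgauss_const_pos[of p] unfolding pgauss_def pgauss_const_def by simp

lemma integrable_poly_pgauss:
  "p \<ge> 1 \<Longrightarrow> integrable lborel (\<lambda>y. poly R y * pgauss p y)"
  using integrable_divide[OF integrable_poly_exp_neg_powr, of p R "pgauss_const p"]
  unfolding pgauss_def by (simp add: mult.assoc)

lemma pgauss_ge_on_unit_interval:
  assumes p: "p \<ge> 1" and y: "\<bar>y\<bar> \<le> 1"
  shows "exp (- 1) / 4 \<le> pgauss p y"
proof -
  have "\<bar>y\<bar> powr p \<le> 1" using p y by (intro powr_le1) auto
  then have "exp (- 1) \<le> exp (- (\<bar>y\<bar> powr p))" by simp
  moreover have "0 < pgauss_const p" "pgauss_const p \<le> 4"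
    using pgauss_const_pos[OF p] pgauss_const_bounds(2)[OF p] by auto
  ultimately show ?thesis unfolding pgauss_def by (intro frac_le) auto
qed

section \<open>Monic and orthogonal polynomials\<close>

lemma monic_poly_abs_ge_prod_root_dist:
  fixes q :: "real poly"
  assumes "lead_coeff q = 1"
  obtains r :: "nat \<Rightarrow> real" where "\<And>y. (\<Prod>i<degree q. \<bar>y - r i\<bar>) \<le> \<bar>poly q y\<bar>"
proof -
  let ?Q = "map_poly complex_of_real q"
  have lc: "lead_coeff ?Q = 1" using assms by (simp add: lead_coeff_map_poly_nz)
  have dg: "degree ?Q = degree q" by (simp add: degree_map_poly)
  obtain root where R: "smult (lead_coeff ?Q) (\<Prod>i<degree ?Q. [:-root i, 1:]) = ?Q"
    by (rule complex_poly_decompose')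
  have "(\<Prod>i<degree q. \<bar>y - Re (root i)\<bar>) \<le> \<bar>poly q y\<bar>" for y
  proof -
    have "complex_of_real (poly q y) = poly ?Q (of_real y)"
      by (induction q) (auto simp: map_poly_pCons)
    also have "\<dots> = (\<Prod>i<degree q. (of_real y - root i))"
      using lc dg by (subst R[symmetric]) (simp add: poly_prod)
    finally have "\<bar>poly q y\<bar> = (\<Prod>i<degree q. cmod (of_real y - root i))"
      by (metis norm_of_real prod_norm)
    moreover have "\<bar>y - Re (root i)\<bar> \<le> cmod (of_real y - root i)" for i
      using abs_Re_le_cmod[of "of_real y - root i"] by simp
    ultimately show ?thesis by (simp add: prod_mono)
  qed
  then show ?thesis by (rule that)
qed

lemma integral_ge_off_intervals:
  fixes g :: "real \<Rightarrow> real" and r :: "nat \<Rightarrow> real"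
  assumes g: "integrable lborel g" "\<And>y. 0 \<le> g y" and c: "0 \<le> c" and \<delta>: "0 < \<delta>"
    and far: "\<And>y. \<bar>y\<bar> \<le> 1 \<Longrightarrow> (\<And>i. i < j \<Longrightarrow> \<delta> \<le> \<bar>y - r i\<bar>) \<Longrightarrow> c \<le> g y"
  shows "c * (2 - 2 * real j * \<delta>) \<le> integral\<^sup>L lborel g"
proof -
  define near where "near y = (\<Sum>i<j. indicator {r i - \<delta> <..< r i + \<delta>} y :: real)" for y
  define L where "L y = c * (indicator {-1..1} y - near y)" for y :: real
  have int_near: "integrable lborel near"
    unfolding near_def by (intro Bochner_Integration.integrable_sum integrable_real_indicator) (use \<delta> in auto)
  have "integral\<^sup>L lborel near = (\<Sum>i<j. (\<integral>y. indicator {r i - \<delta> <..< r i + \<delta>} y \<partial>lborel))"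
    unfolding near_def by (rule Bochner_Integration.integral_sum) (use \<delta> in auto)
  also have "\<dots> = 2 * real j * \<delta>" using \<delta> by simp
  finally have "integral\<^sup>L lborel L = c * (2 - 2 * real j * \<delta>)"
    unfolding L_def using int_near by simp
  moreover have "L y \<le> g y" for y
  proof (cases "\<bar>y\<bar> \<le> 1 \<and> (\<forall>i<j. \<delta> \<le> \<bar>y - r i\<bar>)")
    case True
    then have "near y = 0" unfolding near_def by (intro sum.neutral) (auto simp: abs_if split: if_splits)
    then show ?thesis using True far unfolding L_def by (auto simp: indicator_def abs_le_iff)
  next
    case False
    have "indicator {-1..1} y \<le> near y"
    proof (cases "\<bar>y\<bar> \<le> 1")
      case True
      with False obtain i where "i < j" "\<bar>y - r i\<bar> < \<delta>" by auto
      then have i: "i < j" "y \<in> {r i - \<delta> <..< r i + \<delta>}" by (auto simp: abs_less_iff)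
      have "(indicator {r i - \<delta> <..< r i + \<delta>} y :: real) \<le> near y"
        unfolding near_def by (rule member_le_sum) (use i in auto)
      then have "1 \<le> near y" using i by simp
      then show ?thesis by (simp add: indicator_def)
    next
      case False
      then show ?thesis unfolding near_def by (auto simp: indicator_def abs_le_iff intro: sum_nonneg)
    qed
    then have "L y \<le> 0" unfolding L_def using c by (simp add: mult_nonneg_nonpos)
    then show ?thesis using g(2)[of y] by linarith
  qed
  then have "integral\<^sup>L lborel L \<le> integral\<^sup>L lborel g"
    using g(1) int_near unfolding L_def by (intro Bochner_Integration.integral_mono) auto
  ultimately show ?thesis by simp
qed

definition monic_bound :: "nat \<Rightarrow> real" where
  "monic_bound d = (1 / (2 * (real d + 1))) ^ (2 * d) / (4 * exp 1)"

lemma monic_bound_pos: "monic_bound d > 0"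
  unfolding monic_bound_def by simp

lemma monic_bound_le_1: "monic_bound d \<le> 1"
proof -
  have "(1 / (2 * (real d + 1))) ^ (2 * d) \<le> 1" by (intro power_le_one) auto
  moreover have "1 \<le> 4 * exp (1::real)" using exp_ge_add_one_self[of 1] by simp
  ultimately show ?thesis unfolding monic_bound_def by (simp add: divide_le_eq)
qed

lemma monic_bound_antimono: "j \<le> d \<Longrightarrow> monic_bound d \<le> monic_bound j"
  unfolding monic_bound_def
  by (intro divide_right_mono order.trans[OF power_decreasing power_mono]) (auto simp: frac_le)

text \<open>On [-1,1], away from the intervals of radius 1/(2(j+1)) around the real parts of the j
  roots, a monic q of degree j has absolute value at least (2(j+1))^(-j); the excluded set has
  measure at most 1 and the density is at least exp(-1)/4 on [-1,1].\<close>

lemma integral_monic_sq_pgauss_ge: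
  fixes q :: "real poly"
  assumes p: "p \<ge> 1" and lc: "lead_coeff q = 1" and deg: "degree q \<le> d"
  shows "monic_bound d \<le> (\<integral>y. (poly q y)\<^sup>2 * pgauss p y \<partial>lborel)"
proof -
  obtain r where r: "\<And>y. (\<Prod>i<degree q. \<bar>y - r i\<bar>) \<le> \<bar>poly q y\<bar>"
    using monic_poly_abs_ge_prod_root_dist[OF lc] by blast
  define j where "j = degree q"
  define \<delta> :: real where "\<delta> = 1 / (2 * (real j + 1))"
  have \<delta>: "\<delta> > 0" unfolding \<delta>_def by simp
  have "monic_bound j * (2 - 2 * real j * \<delta>) \<le> (\<integral>y. (poly q y)\<^sup>2 * pgauss p y \<partial>lborel)"
  proof (rule integral_ge_off_intervals[OF _ _ _ \<delta>])
    show "integrable lborel (\<lambda>y. (poly q y)\<^sup>2 * pgauss p y)"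
      using integrable_poly_pgauss[OF p, of "q ^ 2"] by (simp add: poly_power)
    fix y :: real
    show "0 \<le> (poly q y)\<^sup>2 * pgauss p y" using pgauss_nonneg[OF p] by simp
    assume y: "\<bar>y\<bar> \<le> 1" and far: "\<And>i. i < j \<Longrightarrow> \<delta> \<le> \<bar>y - r i\<bar>"
    have "\<delta> ^ j \<le> \<bar>poly q y\<bar>"
      using prod_mono[of "{..<j}" "\<lambda>_. \<delta>" "\<lambda>i. \<bar>y - r i\<bar>"] far \<delta> r[of y] unfolding j_def by auto
    then have "\<delta> ^ (2 * j) \<le> (poly q y)\<^sup>2"
      using \<delta> power_mono[of "\<delta> ^ j" "\<bar>poly q y\<bar>" 2] by (simp add: power_mult[symmetric] mult.commute)
    have "monic_bound j = \<delta> ^ (2 * j) * (exp (- 1) / 4)"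
      unfolding monic_bound_def \<delta>_def by (simp add: exp_minus field_simps)
    also have "\<dots> \<le> (poly q y)\<^sup>2 * pgauss p y"
      using \<open>\<delta> ^ (2 * j) \<le> (poly q y)\<^sup>2\<close> pgauss_ge_on_unit_interval[OF p y] by (intro mult_mono) auto
    finally show "monic_bound j \<le> (poly q y)\<^sup>2 * pgauss p y" .
  qed (use monic_bound_pos[of j] in auto)
  moreover have "monic_bound j \<le> monic_bound j * (2 - 2 * real j * \<delta>)"
  proof -
    have "2 * real j * \<delta> \<le> 1" unfolding \<delta>_def by (simp add: field_simps)
    then show ?thesis using monic_bound_pos[of j] by (simp add: mult_le_cancel_left1)
  qed
  ultimately have "monic_bound j \<le> (\<integral>y. (poly q y)\<^sup>2 * pgauss p y \<partial>lborel)"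
    by linarith
  then show ?thesis using monic_bound_antimono[OF deg] unfolding j_def by linarith
qed

definition pgauss_inner :: "real \<Rightarrow> real poly \<Rightarrow> real poly \<Rightarrow> real" where
  "pgauss_inner p P Q = (\<integral>y. poly P y * poly Q y * pgauss p y \<partial>lborel)"

lemma pgauss_inner_commute: "pgauss_inner p P Q = pgauss_inner p Q P"
  unfolding pgauss_inner_def by (simp add: mult.commute mult.left_commute)

lemma pgauss_inner_add_left:
  assumes "p \<ge> 1"
  shows "pgauss_inner p (P + Q) R = pgauss_inner p P R + pgauss_inner p Q R"
proof -
  have int: "integrable lborel (\<lambda>y. poly P y * poly Q y * pgauss p y)" for P Q
    using integrable_poly_pgauss[OF assms, of "P * Q"] by simp
  show ?thesis
    unfolding pgauss_inner_def by (simp add: distrib_right Bochner_Integration.integral_add[OF int int])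
qed

lemma pgauss_inner_sum_left:
  assumes "p \<ge> 1" "finite K"
  shows "pgauss_inner p (\<Sum>k\<in>K. smult (c k) (P k)) R = (\<Sum>k\<in>K. c k * pgauss_inner p (P k) R)"
proof -
  have smult: "pgauss_inner p (smult a P) R = a * pgauss_inner p P R" for a P
    unfolding pgauss_inner_def by (simp add: mult.assoc)
  show ?thesis
    using assms(2) by (induction K rule: finite_induct)
      (simp_all add: pgauss_inner_add_left[OF assms(1)] smult, simp add: pgauss_inner_def)
qed

lemma pgauss_inner_self: "pgauss_inner p P P = (\<integral>y. (poly P y)\<^sup>2 * pgauss p y \<partial>lborel)"
  unfolding pgauss_inner_def by (simp add: power2_eq_square)

lemma pgauss_inner_orthogonal_sum:
  fixes Q :: "nat \<Rightarrow> real poly" and B :: "nat \<Rightarrow> real"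
  assumes p: "p \<ge> 1"
    and orth: "\<And>i j. i \<le> D \<Longrightarrow> j \<le> D \<Longrightarrow> i \<noteq> j \<Longrightarrow> pgauss_inner p (Q i) (Q j) = 0"
  defines "R \<equiv> \<Sum>j\<le>D. smult (B j) (Q j)"
  shows "pgauss_inner p R R = (\<Sum>j\<le>D. (B j)\<^sup>2 * pgauss_inner p (Q j) (Q j))"
proof -
  have col: "pgauss_inner p (Q j) R = B j * pgauss_inner p (Q j) (Q j)" if j: "j \<le> D" for j
  proof -
    have "pgauss_inner p (Q j) R = (\<Sum>i\<le>D. B i * pgauss_inner p (Q i) (Q j))"
      unfolding R_def by (subst pgauss_inner_commute) (rule pgauss_inner_sum_left[OF p], simp)
    also have "\<dots> = B j * pgauss_inner p (Q j) (Q j)"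
      by (rule sum.remove[where x=j, THEN trans]) (use j orth in \<open>auto intro!: sum.neutral\<close>)
    finally show ?thesis .
  qed
  have "pgauss_inner p R R = (\<Sum>j\<le>D. B j * pgauss_inner p (Q j) R)"
    using pgauss_inner_sum_left[OF p, of "{..D}" B Q R] unfolding R_def by simp
  also have "\<dots> = (\<Sum>j\<le>D. (B j)\<^sup>2 * pgauss_inner p (Q j) (Q j))"
    by (intro sum.cong) (simp_all add: col power2_eq_square)
  finally show ?thesis .
qed

lemma monic_minus_lower_degree:
  fixes R :: "real poly"
  assumes "degree R < n"
  shows "degree (monom 1 n - R) = n" "lead_coeff (monom 1 n - R) = 1"
proof -
  have c: "coeff (monom 1 n - R) n = 1" using assms by (simp add: coeff_eq_0)
  have "degree (monom 1 n - R) \<le> n"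
    using assms by (intro degree_diff_le) (auto simp: degree_monom_le)
  moreover have "n \<le> degree (monom 1 n - R)" using c by (intro le_degree) simp
  ultimately show d: "degree (monom 1 n - R) = n" by simp
  show "lead_coeff (monom 1 n - R) = 1" using c d by simp
qed

lemma orthogonal_monic_polys_exist:
  assumes p: "p \<ge> 1"
  shows "\<exists>Q::nat \<Rightarrow> real poly. \<forall>j\<le>m. lead_coeff (Q j) = 1 \<and> degree (Q j) = j \<and>
            (\<forall>i\<le>m. i \<noteq> j \<longrightarrow> pgauss_inner p (Q i) (Q j) = 0)"
proof (induction m)
  case 0
  show ?case by (rule exI[of _ "\<lambda>_. 1"]) auto
next
  case (Suc m)
  then obtain Q where Q: "\<forall>j\<le>m. lead_coeff (Q j) = 1 \<and> degree (Q j) = j \<and>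
            (\<forall>i\<le>m. i \<noteq> j \<longrightarrow> pgauss_inner p (Q i) (Q j) = 0)" by blast
  define c where "c i = pgauss_inner p (monom 1 (Suc m)) (Q i) / pgauss_inner p (Q i) (Q i)" for i
  define R where "R = (\<Sum>i\<le>m. smult (c i) (Q i))"
  define N where "N = monom 1 (Suc m) - R"
  have "degree R < Suc m"
    unfolding R_def
    by (rule le_less_trans[OF degree_sum_le]) (use Q in \<open>auto intro: order_trans[OF degree_smult_le]\<close>)
  then have N: "degree N = Suc m" "lead_coeff N = 1"
    unfolding N_def using monic_minus_lower_degree by auto
  have orth: "pgauss_inner p N (Q i) = 0" if i: "i \<le> m" for i
  proof -
    have pos: "pgauss_inner p (Q i) (Q i) > 0"
      using integral_monic_sq_pgauss_ge[OF p, of "Q i" m] Q i monic_bound_pos[of m]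
      by (auto simp: pgauss_inner_self)
    have "pgauss_inner p R (Q i) = (\<Sum>k\<le>m. c k * pgauss_inner p (Q k) (Q i))"
      unfolding R_def by (rule pgauss_inner_sum_left[OF p]) simp
    also have "\<dots> = c i * pgauss_inner p (Q i) (Q i)"
      by (rule sum.remove[where x=i, THEN trans]) (use i Q in \<open>auto intro!: sum.neutral\<close>)
    also have "\<dots> = pgauss_inner p (monom 1 (Suc m)) (Q i)"
      unfolding c_def using pos by simp
    finally show ?thesis
      using pgauss_inner_add_left[OF p, of N R "Q i"] unfolding N_def by simp
  qed
  show ?case
  proof (rule exI[of _ "Q(Suc m := N)"], intro allI impI conjI)
    fix j assume j: "j \<le> Suc m"
    show "lead_coeff ((Q(Suc m := N)) j) = 1" "degree ((Q(Suc m := N)) j) = j"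
      using j Q N by (auto simp: le_Suc_eq)
    fix i assume "i \<le> Suc m" "i \<noteq> j"
    then show "pgauss_inner p ((Q(Suc m := N)) i) ((Q(Suc m := N)) j) = 0"
      using j Q orth by (auto simp: le_Suc_eq pgauss_inner_commute)
  qed
qed

lemma monic_degree_0_eq_1: "degree q = 0 \<Longrightarrow> lead_coeff q = 1 \<Longrightarrow> q = 1"
  by (metis degree_eq_zeroE lead_coeff_pCons(2) one_pCons)

lemma poly_expand_monic_basis:
  fixes Q :: "nat \<Rightarrow> real poly"
  assumes "\<forall>j\<le>k. lead_coeff (Q j) = 1 \<and> degree (Q j) = j" and "degree P \<le> k"
  shows "\<exists>e. P = (\<Sum>j\<le>k. smult (e j) (Q j)) \<and> e k = coeff P k"
  using assms
proof (induction k arbitrary: P)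
  case 0
  then have "Q 0 = 1" by (intro monic_degree_0_eq_1) auto
  moreover from 0 obtain a where "P = [:a:]" by (metis degree_eq_zeroE le_zero_eq)
  ultimately show ?case by (intro exI[of _ "\<lambda>_. a"]) auto
next
  case (Suc k)
  define P' where "P' = P - smult (coeff P (Suc k)) (Q (Suc k))"
  have QS: "coeff (Q (Suc k)) (Suc k) = 1" "degree (Q (Suc k)) = Suc k" using Suc.prems(1) by auto
  have "coeff P' i = 0" if "i > k" for i
  proof (cases "i = Suc k")
    case False
    then have "i > degree P" "i > degree (Q (Suc k))" using that Suc.prems(2) QS by auto
    then show ?thesis unfolding P'_def by (simp add: coeff_eq_0)
  qed (simp add: P'_def QS)
  then have "degree P' \<le> k" by (intro degree_le) auto
  then obtain e where e: "P' = (\<Sum>j\<le>k. smult (e j) (Q j))"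
    using Suc.IH[of P'] Suc.prems(1) by (meson le_SucI)
  have "P = P' + smult (coeff P (Suc k)) (Q (Suc k))" unfolding P'_def by simp
  also have "\<dots> = (\<Sum>j\<le>Suc k. smult ((e(Suc k := coeff P (Suc k))) j) (Q j))"
    using e by (simp add: sum.atMost_Suc)
  finally show ?case by (intro exI[of _ "e(Suc k := coeff P (Suc k))"]) simp
qed

lemma pgauss_inner_monic_ge:
  assumes p: "p \<ge> 1" and Q: "lead_coeff Q = 1" "degree Q = j" and j: "j \<le> d"
  shows "monic_bound d ^ j \<le> pgauss_inner p Q Q"
proof (cases "j = 0")
  case True
  then have "Q = 1" using Q by (intro monic_degree_0_eq_1) auto
  then show ?thesis using True integral_pgauss[OF p] by (simp add: pgauss_inner_def)
next
  case False
  then have "monic_bound d ^ j \<le> monic_bound d"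
    using power_decreasing[of 1 j "monic_bound d"] monic_bound_pos[of d] monic_bound_le_1[of d] by simp
  also have "\<dots> \<le> pgauss_inner p Q Q"
    unfolding pgauss_inner_self using Q j by (intro integral_monic_sq_pgauss_ge[OF p]) auto
  finally show ?thesis .
qed

lemma sum_monomials_eq_poly_basis:
  fixes Q :: "nat \<Rightarrow> 'a::comm_ring_1 poly"
  assumes "\<And>k. k \<le> D \<Longrightarrow> monom 1 k = (\<Sum>j\<le>D. smult (e k j) (Q j))"
  shows "(\<Sum>k\<le>D. y ^ k * A k) = poly (\<Sum>j\<le>D. smult (\<Sum>k\<le>D. e k j * A k) (Q j)) y"
proof -
  have "(\<Sum>k\<le>D. y ^ k * A k) = (\<Sum>k\<le>D. A k * poly (monom 1 k) y)"
    by (simp add: poly_monom mult.commute)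
  also have "\<dots> = (\<Sum>k\<le>D. \<Sum>j\<le>D. e k j * A k * poly (Q j) y)"
    using assms by (simp add: poly_sum sum_distrib_left mult_ac)
  also have "\<dots> = poly (\<Sum>j\<le>D. smult (\<Sum>k\<le>D. e k j * A k) (Q j)) y"
    by (subst sum.swap) (simp add: poly_sum sum_distrib_right)
  finally show ?thesis .
qed

text \<open>With monic orthogonal Q_j, e k j is the coefficient of Q_j in y^k, so the integral is
  the sum of (B j)^2 times the squared norm of Q_j, where B j = sum_k e k j * A k.\<close>

lemma pgauss_poly_sq_integral_ge_triangular:
  assumes p: "p \<ge> 1"
  obtains e :: "nat \<Rightarrow> nat \<Rightarrow> real"
  where "\<And>k j. k < j \<Longrightarrow> e k j = 0" and "\<And>j. j \<le> d \<Longrightarrow> e j j = 1"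
    and "\<And>D A. D \<le> d \<Longrightarrow> (\<Sum>j\<le>D. monic_bound d ^ j * (\<Sum>k\<le>D. e k j * A k)\<^sup>2)
            \<le> (\<integral>y. (\<Sum>k\<le>D. y ^ k * A k)\<^sup>2 * pgauss p y \<partial>lborel)"
proof -
  obtain Q where Q: "\<forall>j\<le>d. lead_coeff (Q j) = 1 \<and> degree (Q j) = j \<and>
      (\<forall>i\<le>d. i \<noteq> j \<longrightarrow> pgauss_inner p (Q i) (Q j) = 0)"
    using orthogonal_monic_polys_exist[OF p] by blast
  have "\<exists>E. monom 1 k = (\<Sum>j\<le>k. smult (E j) (Q j)) \<and> E k = 1" if "k \<le> d" for k
  proof -
    have "\<forall>j\<le>k. lead_coeff (Q j) = 1 \<and> degree (Q j) = j" using Q that le_trans by blast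
    from poly_expand_monic_basis[OF this, of "monom 1 k"] show ?thesis by (simp add: degree_monom_le)
  qed
  then obtain E where E: "\<And>k. k \<le> d \<Longrightarrow> monom 1 k = (\<Sum>j\<le>k. smult (E k j) (Q j)) \<and> E k k = 1"
    by metis
  define e where "e k j = (if j \<le> k then E k j else 0)" for k j
  show ?thesis
  proof (rule that)
    show "e k j = 0" if "k < j" for k j using that unfolding e_def by simp
    show "e j j = 1" if "j \<le> d" for j using that E unfolding e_def by simp
    fix D A assume D: "D \<le> d"
    define B where "B j = (\<Sum>k\<le>D. e k j * A k)" for j
    have "monom 1 k = (\<Sum>j\<le>D. smult (e k j) (Q j))" if "k \<le> D" for k
      using E[of k] that D unfolding e_def by (auto intro!: sum.mono_neutral_cong_left split: if_split_asm)
    note basis = sum_monomials_eq_poly_basis[OF this, of _ A, folded B_def]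
    have "(\<Sum>j\<le>D. monic_bound d ^ j * (B j)\<^sup>2) \<le> (\<Sum>j\<le>D. (B j)\<^sup>2 * pgauss_inner p (Q j) (Q j))"
    proof (intro sum_mono)
      fix j assume "j \<in> {..D}"
      then have "monic_bound d ^ j \<le> pgauss_inner p (Q j) (Q j)"
        using Q[rule_format, of j] D by (intro pgauss_inner_monic_ge[OF p]) auto
      then show "monic_bound d ^ j * (B j)\<^sup>2 \<le> (B j)\<^sup>2 * pgauss_inner p (Q j) (Q j)"
        by (metis mult.commute mult_right_mono zero_le_power2)
    qed
    also have "\<dots> = pgauss_inner p (\<Sum>j\<le>D. smult (B j) (Q j)) (\<Sum>j\<le>D. smult (B j) (Q j))"
      using Q D by (intro pgauss_inner_orthogonal_sum[OF p, symmetric]) auto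
    also have "\<dots> = (\<integral>y. (\<Sum>k\<le>D. y ^ k * A k)\<^sup>2 * pgauss p y \<partial>lborel)"
      by (simp add: pgauss_inner_self basis)
    finally show "(\<Sum>j\<le>D. monic_bound d ^ j * (B j)\<^sup>2)
        \<le> (\<integral>y. (\<Sum>k\<le>D. y ^ k * A k)\<^sup>2 * pgauss p y \<partial>lborel)" .
  qed
qed

section \<open>Polynomials in several variables and tensorisation\<close>

abbreviation lborel_Pi :: "nat \<Rightarrow> (nat \<Rightarrow> real) measure" where
  "lborel_Pi n \<equiv> PiM {..<n} (\<lambda>_. lborel)"

definition multi_idx_le :: "nat \<Rightarrow> nat \<Rightarrow> (nat \<Rightarrow> nat) set" where
  "multi_idx_le n D = {I. (\<forall>i\<ge>n. I i = 0) \<and> (\<Sum>i<n. I i) \<le> D}"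

definition mpoly :: "nat \<Rightarrow> nat \<Rightarrow> ((nat \<Rightarrow> nat) \<Rightarrow> real) \<Rightarrow> (nat \<Rightarrow> real) \<Rightarrow> real" where
  "mpoly n D \<beta> x = (\<Sum>I\<in>multi_idx_le n D. \<beta> I * (\<Prod>i<n. x i ^ I i))"

lemma finite_multi_idx_le: "finite (multi_idx_le n D)"
proof (rule finite_subset)
  have "I i \<le> D" if I: "I \<in> multi_idx_le n D" and "i < n" for I i
  proof -
    have "I i \<le> (\<Sum>i<n. I i)" using \<open>i < n\<close> by (intro member_le_sum) auto
    then show ?thesis using I by (simp add: multi_idx_le_def)
  qed
  then show "multi_idx_le n D \<subseteq> {I. \<forall>i. (i \<in> {..<n} \<longrightarrow> I i \<in> {..D}) \<and> (i \<notin> {..<n} \<longrightarrow> I i = 0)}"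
    by (auto simp: multi_idx_le_def)
  show "finite {I. \<forall>i. (i \<in> {..<n} \<longrightarrow> I i \<in> {..D}) \<and> (i \<notin> {..<n} \<longrightarrow> I i = (0::nat))}"
    by (rule finite_set_of_finite_funs) auto
qed

lemma multi_idx_subset_le: "multi_idx n D \<subseteq> multi_idx_le n D"
  unfolding multi_idx_def multi_idx_le_def by auto

lemma finite_multi_idx: "finite (multi_idx n D)"
  using finite_subset[OF multi_idx_subset_le finite_multi_idx_le] .

text \<open>R is (=) or (\<le>): multi-indices of exact or of bounded total degree.\<close>

lemma bij_betw_split_last_index:
  fixes R :: "nat \<Rightarrow> nat \<Rightarrow> bool"
  assumes R: "\<And>a b. R (b + a) D \<longleftrightarrow> a \<le> D \<and> R b (D - a)"
  shows "bij_betw (\<lambda>I. (I n, I(n := 0))) {I. (\<forall>i\<ge>Suc n. I i = 0) \<and> R (\<Sum>i<Suc n. I i) D}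
           (SIGMA k:{..D}. {I. (\<forall>i\<ge>n. I i = 0) \<and> R (\<Sum>i<n. I i) (D - k)})"
proof (rule bij_betw_byWitness[where f'="\<lambda>(k, I). I(n := k)"])
  have upd: "(\<Sum>i<n. (I(n := k)) i) = (\<Sum>i<n. I i)" for I :: "nat \<Rightarrow> nat" and k
    by (intro sum.cong) auto
  show "\<forall>I\<in>{I. (\<forall>i\<ge>Suc n. I i = 0) \<and> R (\<Sum>i<Suc n. I i) D}. (\<lambda>(k, J). J(n := k)) (I n, I(n := 0)) = I"
    by auto
  show "\<forall>z\<in>(SIGMA k:{..D}. {I. (\<forall>i\<ge>n. I i = 0) \<and> R (\<Sum>i<n. I i) (D - k)}).
      (\<lambda>I. (I n, I(n := 0))) ((\<lambda>(k, J). J(n := k)) z) = z"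
    by auto
  show "(\<lambda>I. (I n, I(n := 0))) ` {I. (\<forall>i\<ge>Suc n. I i = 0) \<and> R (\<Sum>i<Suc n. I i) D}
      \<subseteq> (SIGMA k:{..D}. {I. (\<forall>i\<ge>n. I i = 0) \<and> R (\<Sum>i<n. I i) (D - k)})"
    using R by (auto simp: upd[of _ 0, simplified] Suc_le_eq)
  show "(\<lambda>(k, J). J(n := k)) ` (SIGMA k:{..D}. {I. (\<forall>i\<ge>n. I i = 0) \<and> R (\<Sum>i<n. I i) (D - k)})
      \<subseteq> {I. (\<forall>i\<ge>Suc n. I i = 0) \<and> R (\<Sum>i<Suc n. I i) D}"
    using R by (auto simp: upd)
qed

lemma sum_split_last_index:
  fixes R :: "nat \<Rightarrow> nat \<Rightarrow> bool"
  assumes R: "\<And>a b. R (b + a) D \<longleftrightarrow> a \<le> D \<and> R b (D - a)"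
    and fin: "\<And>k. finite {I. (\<forall>i\<ge>n. I i = 0) \<and> R (\<Sum>i<n. I i) k}"
  shows "(\<Sum>I\<in>{I. (\<forall>i\<ge>Suc n. I i = 0) \<and> R (\<Sum>i<Suc n. I i) D}. f I)
       = (\<Sum>k\<le>D. \<Sum>I\<in>{I. (\<forall>i\<ge>n. I i = 0) \<and> R (\<Sum>i<n. I i) (D - k)}. f (I(n := k)))"
proof -
  have "(\<Sum>I\<in>{I. (\<forall>i\<ge>Suc n. I i = 0) \<and> R (\<Sum>i<Suc n. I i) D}. f I)
      = (\<Sum>I\<in>{I. (\<forall>i\<ge>Suc n. I i = 0) \<and> R (\<Sum>i<Suc n. I i) D}. (\<lambda>(k, J). f (J(n := k))) (I n, I(n := 0)))"
    by (intro sum.cong) auto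
  also have "\<dots> = (\<Sum>z\<in>(SIGMA k:{..D}. {I. (\<forall>i\<ge>n. I i = 0) \<and> R (\<Sum>i<n. I i) (D - k)}). (\<lambda>(k, J). f (J(n := k))) z)"
    by (rule sum.reindex_bij_betw[OF bij_betw_split_last_index[OF R]])
  also have "\<dots> = (\<Sum>k\<le>D. \<Sum>I\<in>{I. (\<forall>i\<ge>n. I i = 0) \<and> R (\<Sum>i<n. I i) (D - k)}. f (I(n := k)))"
    by (subst sum.Sigma[symmetric]) (auto simp: fin)
  finally show ?thesis .
qed

lemma sum_multi_idx_Suc:
  "(\<Sum>I\<in>multi_idx (Suc n) D. f I) = (\<Sum>k\<le>D. \<Sum>I\<in>multi_idx n (D - k). f (I(n := k)))"
  unfolding multi_idx_def
  by (rule sum_split_last_index[where R="(=)"]) (auto simp: finite_multi_idx[unfolded multi_idx_def])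

lemma sum_multi_idx_le_Suc:
  "(\<Sum>I\<in>multi_idx_le (Suc n) D. f I) = (\<Sum>k\<le>D. \<Sum>I\<in>multi_idx_le n (D - k). f (I(n := k)))"
  unfolding multi_idx_le_def
  by (rule sum_split_last_index[where R="(\<le>)"]) (auto simp: finite_multi_idx_le[unfolded multi_idx_le_def])

lemma mpoly_Suc:
  "mpoly (Suc n) D \<beta> (x(n := y)) = (\<Sum>k\<le>D. y ^ k * mpoly n (D - k) (\<lambda>I. \<beta> (I(n := k))) x)"
proof -
  have "(\<Prod>i<Suc n. (x(n := y)) i ^ (I(n := k)) i) = y ^ k * (\<Prod>i<n. x i ^ I i)" for I k
  proof -
    have "(\<Prod>i<n. (x(n := y)) i ^ (I(n := k)) i) = (\<Prod>i<n. x i ^ I i)" by (intro prod.cong) auto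
    then show ?thesis by (simp add: lessThan_Suc mult.commute)
  qed
  then show ?thesis
    unfolding mpoly_def sum_multi_idx_le_Suc by (simp add: sum_distrib_left mult_ac)
qed

lemma hom_poly_eq_mpoly:
  "hom_poly n d \<alpha> x = mpoly n d (\<lambda>I. if I \<in> multi_idx n d then \<alpha> I else 0) x"
  unfolding hom_poly_def mpoly_def
  by (rule sum.mono_neutral_cong_left) (auto simp: finite_multi_idx_le multi_idx_subset_le[THEN subsetD])

lemma mpoly_measurable [measurable]: "mpoly n D \<beta> \<in> borel_measurable (lborel_Pi n)"
  unfolding mpoly_def by measurable

text \<open>Coefficients, as a polynomial in x_0, ..., x_(n-1), of sum_k e k j * c_k, where c_k is the
  coefficient of x_n^k in the polynomial with coefficients \<beta>.\<close>

definition slice_combination ::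
    "(nat \<Rightarrow> nat \<Rightarrow> real) \<Rightarrow> nat \<Rightarrow> nat \<Rightarrow> ((nat \<Rightarrow> nat) \<Rightarrow> real) \<Rightarrow> nat \<Rightarrow> (nat \<Rightarrow> nat) \<Rightarrow> real" where
  "slice_combination e n D \<beta> j I =
     (\<Sum>k\<le>D. e k j * (if I \<in> multi_idx_le n (D - k) then \<beta> (I(n := k)) else 0))"

lemma mpoly_slice_combination:
  assumes e0: "\<And>k j. k < j \<Longrightarrow> e k j = 0"
  shows "(\<Sum>k\<le>D. e k j * mpoly n (D - k) (\<lambda>I. \<beta> (I(n := k))) x)
       = mpoly n (D - j) (slice_combination e n D \<beta> j) x"
proof -
  have "e k j * mpoly n (D - k) (\<lambda>I. \<beta> (I(n := k))) x =
      (\<Sum>I\<in>multi_idx_le n (D - j). e k j * ((if I \<in> multi_idx_le n (D - k) then \<beta> (I(n := k)) else 0)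
        * (\<Prod>i<n. x i ^ I i)))" for k
  proof (cases "k < j")
    case False
    then have "multi_idx_le n (D - k) \<subseteq> multi_idx_le n (D - j)" by (auto simp: multi_idx_le_def)
    then have "mpoly n (D - k) (\<lambda>I. \<beta> (I(n := k))) x =
        (\<Sum>I\<in>multi_idx_le n (D - j). (if I \<in> multi_idx_le n (D - k) then \<beta> (I(n := k)) else 0) * (\<Prod>i<n. x i ^ I i))"
      unfolding mpoly_def by (intro sum.mono_neutral_cong_left) (auto simp: finite_multi_idx_le)
    then show ?thesis by (simp add: sum_distrib_left)
  qed (simp add: e0)
  then show ?thesis
    unfolding mpoly_def slice_combination_def
    by (simp add: sum.swap[of _ "{..D}"] sum_distrib_right mult.assoc)
qed

lemma slice_combination_top_coeff:
  assumes e0: "\<And>k j. k < j \<Longrightarrow> e k j = 0" and "e j j = 1" "j \<le> D" "I \<in> multi_idx n (D - j)"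
  shows "slice_combination e n D \<beta> j I = \<beta> (I(n := j))"
proof -
  have I: "(\<Sum>i<n. I i) = D - j" "\<forall>i\<ge>n. I i = 0" using assms(4) by (auto simp: multi_idx_def)
  have zero: "e k j * (if I \<in> multi_idx_le n (D - k) then \<beta> (I(n := k)) else 0) = 0" if "k \<noteq> j" "k \<le> D" for k
    using that e0[of k j] I \<open>j \<le> D\<close> by (cases "k < j") (auto simp: multi_idx_le_def)
  then have "slice_combination e n D \<beta> j I
      = e j j * (if I \<in> multi_idx_le n (D - j) then \<beta> (I(n := j)) else 0)"
    unfolding slice_combination_def using \<open>j \<le> D\<close>
    by (subst sum.remove[of _ j]) (auto intro!: sum.neutral zero)
  then show ?thesis using assms(2) I by (simp add: multi_idx_le_def)
qed

context
  fixes \<rho> :: "real \<Rightarrow> real" and c :: real and d :: nat and e :: "nat \<Rightarrow> nat \<Rightarrow> real"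
  assumes density_measurable [measurable]: "\<rho> \<in> borel_measurable borel"
    and density_nonneg: "\<And>y. 0 \<le> \<rho> y"
    and integrable_poly_sq_density: "\<And>D A. integrable lborel (\<lambda>y. (\<Sum>k\<le>D. y ^ k * A k)\<^sup>2 * \<rho> y)"
    and weight_nonneg: "0 \<le> c" and weight_le_1: "c \<le> 1"
    and upper_triangular: "\<And>k j. k < j \<Longrightarrow> e k j = 0"
    and unit_diagonal: "\<And>j. j \<le> d \<Longrightarrow> e j j = 1"
    and univariate_bound: "\<And>D A. D \<le> d \<Longrightarrow> (\<Sum>j\<le>D. c ^ j * (\<Sum>k\<le>D. e k j * A k)\<^sup>2)
                                \<le> (\<integral>y. (\<Sum>k\<le>D. y ^ k * A k)\<^sup>2 * \<rho> y \<partial>lborel)"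
begin

lemma nn_integral_fiber_ge:
  assumes D: "D \<le> d"
  shows "ennreal ((\<Prod>i<n. \<rho> (x i)) * (\<Sum>j\<le>D. c ^ j * (mpoly n (D - j) (slice_combination e n D \<beta> j) x)\<^sup>2))
    \<le> (\<integral>\<^sup>+ y. ennreal ((mpoly (Suc n) D \<beta> (x(n := y)))\<^sup>2 * (\<Prod>i<Suc n. \<rho> ((x(n := y)) i))) \<partial>lborel)"
proof -
  define W where "W = (\<Prod>i<n. \<rho> (x i))"
  define A where "A k = mpoly n (D - k) (\<lambda>I. \<beta> (I(n := k))) x" for k
  have W: "0 \<le> W" unfolding W_def using density_nonneg by (simp add: prod_nonneg)
  have comb: "(\<Sum>k\<le>D. e k j * A k) = mpoly n (D - j) (slice_combination e n D \<beta> j) x" for j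
    unfolding A_def by (rule mpoly_slice_combination[OF upper_triangular])
  have "(\<integral>\<^sup>+ y. ennreal ((mpoly (Suc n) D \<beta> (x(n := y)))\<^sup>2 * (\<Prod>i<Suc n. \<rho> ((x(n := y)) i))) \<partial>lborel)
      = (\<integral>\<^sup>+ y. ennreal W * ennreal ((\<Sum>k\<le>D. y ^ k * A k)\<^sup>2 * \<rho> y) \<partial>lborel)"
    using W density_nonneg
    by (intro nn_integral_cong) (simp add: mpoly_Suc W_def A_def lessThan_Suc ennreal_mult[symmetric] mult_ac)
  also have "\<dots> = ennreal W * ennreal (\<integral>y. (\<Sum>k\<le>D. y ^ k * A k)\<^sup>2 * \<rho> y \<partial>lborel)"
    by (subst nn_integral_cmult, measurable)
       (use integrable_poly_sq_density density_nonneg in \<open>simp add: nn_integral_eq_integral\<close>)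
  also have "\<dots> \<ge> ennreal (W * (\<Sum>j\<le>D. c ^ j * (\<Sum>k\<le>D. e k j * A k)\<^sup>2))"
    using W univariate_bound[OF D, of A]
    by (simp add: ennreal_mult[symmetric] mult_left_mono ennreal_leI
                  Bochner_Integration.integral_nonneg density_nonneg)
  finally show ?thesis by (simp only: comb W_def)
qed

lemma weighted_top_coeffs_split:
  assumes "D \<le> d"
  shows "c ^ D * (\<Sum>I\<in>multi_idx (Suc n) D. (\<beta> I)\<^sup>2)
    = (\<Sum>j\<le>D. c ^ j * (c ^ (D - j) * (\<Sum>I\<in>multi_idx n (D - j). (slice_combination e n D \<beta> j I)\<^sup>2)))"
  unfolding sum_multi_idx_Suc sum_distrib_left[of "c ^ D" _ "{..D}"]
proof (intro sum.cong refl)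
  fix j assume j: "j \<in> {..D}"
  have "(\<Sum>I\<in>multi_idx n (D - j). (slice_combination e n D \<beta> j I)\<^sup>2)
      = (\<Sum>I\<in>multi_idx n (D - j). (\<beta> (I(n := j)))\<^sup>2)"
    using j assms by (intro sum.cong refl) (simp add: slice_combination_top_coeff[OF upper_triangular] unit_diagonal)
  moreover have "c ^ D = c ^ j * c ^ (D - j)" using j by (simp add: power_add[symmetric])
  ultimately show "c ^ D * (\<Sum>I\<in>multi_idx n (D - j). (\<beta> (I(n := j)))\<^sup>2)
      = c ^ j * (c ^ (D - j) * (\<Sum>I\<in>multi_idx n (D - j). (slice_combination e n D \<beta> j I)\<^sup>2))"
    by (simp add: mult.assoc)
qed

lemma nn_integral_mpoly_sq_density_ge:
  assumes "D \<le> d"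
  shows "ennreal (c ^ D * (\<Sum>I\<in>multi_idx n D. (\<beta> I)\<^sup>2))
    \<le> (\<integral>\<^sup>+ x. ennreal ((mpoly n D \<beta> x)\<^sup>2 * (\<Prod>i<n. \<rho> (x i))) \<partial>lborel_Pi n)"
  using assms
proof (induction n arbitrary: D \<beta>)
  case 0
  have "multi_idx 0 D \<subseteq> {\<lambda>_. 0}" "multi_idx_le 0 D = {\<lambda>_. 0}"
    unfolding multi_idx_def multi_idx_le_def by auto
  then show ?case
    using weight_nonneg weight_le_1
    by (auto simp: mpoly_def PiM_empty subset_singleton_iff intro!: ennreal_leI mult_left_le_one_le power_le_one)
next
  case (Suc n)
  interpret product_sigma_finite "\<lambda>_::nat. lborel :: real measure" by standard
  define \<gamma> where "\<gamma> = slice_combination e n D \<beta>"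
  define W where "W x = (\<Prod>i<n. \<rho> (x i))" for x :: "nat \<Rightarrow> real"
  have W: "0 \<le> W x" for x unfolding W_def using density_nonneg by (simp add: prod_nonneg)
  have "ennreal (c ^ D * (\<Sum>I\<in>multi_idx (Suc n) D. (\<beta> I)\<^sup>2))
      = (\<Sum>j\<le>D. ennreal (c ^ j) * ennreal (c ^ (D - j) * (\<Sum>I\<in>multi_idx n (D - j). (\<gamma> j I)\<^sup>2)))"
    unfolding weighted_top_coeffs_split[OF Suc.prems] \<gamma>_def using weight_nonneg
    by (subst sum_ennreal[symmetric]) (auto intro!: sum.cong simp: ennreal_mult sum_nonneg)
  also have "\<dots> \<le> (\<Sum>j\<le>D. ennreal (c ^ j) *
      (\<integral>\<^sup>+ x. ennreal ((mpoly n (D - j) (\<gamma> j) x)\<^sup>2 * W x) \<partial>lborel_Pi n))"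
    using Suc.IH Suc.prems unfolding W_def by (intro sum_mono mult_left_mono) auto
  also have "\<dots> = (\<integral>\<^sup>+ x. ennreal (W x * (\<Sum>j\<le>D. c ^ j * (mpoly n (D - j) (\<gamma> j) x)\<^sup>2)) \<partial>lborel_Pi n)"
  proof -
    have "(\<integral>\<^sup>+ x. ennreal (W x * (\<Sum>j\<le>D. c ^ j * (mpoly n (D - j) (\<gamma> j) x)\<^sup>2)) \<partial>lborel_Pi n)
        = (\<integral>\<^sup>+ x. (\<Sum>j\<le>D. ennreal (c ^ j) * ennreal ((mpoly n (D - j) (\<gamma> j) x)\<^sup>2 * W x)) \<partial>lborel_Pi n)"
      using W weight_nonneg
      by (intro nn_integral_cong) (simp add: sum_distrib_left ennreal_mult[symmetric] sum_ennreal mult_ac)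
    also have "\<dots> = (\<Sum>j\<le>D. ennreal (c ^ j) * (\<integral>\<^sup>+ x. ennreal ((mpoly n (D - j) (\<gamma> j) x)\<^sup>2 * W x) \<partial>lborel_Pi n))"
      by (subst nn_integral_sum) (auto simp: W_def intro!: sum.cong nn_integral_cmult)
    finally show ?thesis by simp
  qed
  also have "\<dots> \<le> (\<integral>\<^sup>+ x. (\<integral>\<^sup>+ y. ennreal ((mpoly (Suc n) D \<beta> (x(n := y)))\<^sup>2 * (\<Prod>i<Suc n. \<rho> ((x(n := y)) i))) \<partial>lborel) \<partial>lborel_Pi n)"
    unfolding W_def \<gamma>_def by (intro nn_integral_mono nn_integral_fiber_ge Suc.prems)
  also have "\<dots> = (\<integral>\<^sup>+ x. ennreal ((mpoly (Suc n) D \<beta> x)\<^sup>2 * (\<Prod>i<Suc n. \<rho> (x i))) \<partial>lborel_Pi (Suc n))"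
    unfolding lessThan_Suc by (rule product_nn_integral_insert[symmetric]) (auto simp flip: lessThan_Suc)
  finally show ?case .
qed

end

section \<open>Integration over level sets of the l_p norm\<close>

text \<open>Restricted to {..<n}, so that it maps the extensional functions in the space of
  lborel_Pi n to themselves.\<close>

definition dilate :: "nat \<Rightarrow> real \<Rightarrow> (nat \<Rightarrow> real) \<Rightarrow> (nat \<Rightarrow> real)" where
  "dilate n t x = restrict (\<lambda>i. t * x i) {..<n}"

lemma dilate_measurable [measurable]: "dilate n t \<in> measurable (lborel_Pi n) (lborel_Pi n)"
  unfolding dilate_def by measurable

lemma dilate_fun_upd: "(dilate n t x)(n := t * y) = dilate (Suc n) t (x(n := y))"
  unfolding dilate_def by (auto simp: restrict_def)

lemma borel_measurable_nn_integral_fun_upd: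
  assumes [measurable]: "h \<in> borel_measurable (lborel_Pi (Suc n))"
  shows "(\<lambda>x. \<integral>\<^sup>+ y. h (x(n := t * y)) \<partial>lborel) \<in> borel_measurable (lborel_Pi n)"
proof -
  have [measurable]: "h \<in> borel_measurable (PiM (insert n {..<n}) (\<lambda>_. lborel))"
    using assms by (simp add: lessThan_Suc)
  have "(\<lambda>z. (fst z)(n := t * snd z)) \<in> measurable (lborel_Pi n \<Otimes>\<^sub>M lborel) (PiM (insert n {..<n}) (\<lambda>_. lborel))"
    by (rule measurable_fun_upd[where J="{..<n}"]) auto
  from measurable_compose[OF this assms[unfolded lessThan_Suc]]
  have [measurable]: "(\<lambda>(x, y). h (x(n := t * y))) \<in> borel_measurable (lborel_Pi n \<Otimes>\<^sub>M lborel)"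
    by (simp add: case_prod_beta')
  show ?thesis by measurable
qed

lemma nn_integral_dilate:
  assumes t: "t > 0" and "h \<in> borel_measurable (lborel_Pi n)"
  shows "(\<integral>\<^sup>+ x. h x \<partial>lborel_Pi n) = ennreal (t ^ n) * (\<integral>\<^sup>+ x. h (dilate n t x) \<partial>lborel_Pi n)"
  using assms(2)
proof (induction n arbitrary: h)
  case 0
  interpret product_sigma_finite "\<lambda>_::nat. lborel :: real measure" by standard
  have "dilate 0 t (\<lambda>k. undefined) = (\<lambda>k. undefined)" unfolding dilate_def by auto
  then show ?case by (simp add: nn_integral_empty)
next
  case (Suc n)
  interpret product_sigma_finite "\<lambda>_::nat. lborel :: real measure" by standard
  note [measurable] = Suc.prems
  have h_insert [measurable]: "h \<in> borel_measurable (PiM (insert n {..<n}) (\<lambda>_. lborel))"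
    using Suc.prems by (simp add: lessThan_Suc)
  have [measurable]: "(\<lambda>x. h (dilate (Suc n) t x)) \<in> borel_measurable (PiM (insert n {..<n}) (\<lambda>_. lborel))"
    using measurable_compose[OF dilate_measurable Suc.prems] by (simp add: lessThan_Suc)
  define H where "H x = (\<integral>\<^sup>+ y. h (x(n := t * y)) \<partial>lborel)" for x
  have [measurable]: "H \<in> borel_measurable (lborel_Pi n)"
    unfolding H_def by (rule borel_measurable_nn_integral_fun_upd[OF Suc.prems])
  have "(\<integral>\<^sup>+ x. h x \<partial>lborel_Pi (Suc n)) = (\<integral>\<^sup>+ x. (\<integral>\<^sup>+ y. h (x(n := y)) \<partial>lborel) \<partial>lborel_Pi n)"
    unfolding lessThan_Suc by (rule product_nn_integral_insert) auto
  also have "\<dots> = (\<integral>\<^sup>+ x. ennreal t * H x \<partial>lborel_Pi n)"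
  proof (rule nn_integral_cong)
    fix x assume x: "x \<in> space (lborel_Pi n)"
    have [measurable]: "(\<lambda>y. h (x(n := y))) \<in> borel_measurable borel"
      using measurable_compose[OF measurable_component_update[OF x, of n] h_insert] by simp
    show "(\<integral>\<^sup>+ y. h (x(n := y)) \<partial>lborel) = ennreal t * H x"
      unfolding H_def using nn_integral_real_affine[of "\<lambda>y. h (x(n := y))" t 0] t by simp
  qed
  also have "\<dots> = ennreal t * (\<integral>\<^sup>+ x. H x \<partial>lborel_Pi n)" by (rule nn_integral_cmult) measurable
  also have "(\<integral>\<^sup>+ x. H x \<partial>lborel_Pi n) = ennreal (t ^ n) * (\<integral>\<^sup>+ x. H (dilate n t x) \<partial>lborel_Pi n)"
    by (rule Suc.IH) measurable
  also have "(\<integral>\<^sup>+ x. H (dilate n t x) \<partial>lborel_Pi n)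
      = (\<integral>\<^sup>+ x. (\<integral>\<^sup>+ y. h (dilate (Suc n) t (x(n := y))) \<partial>lborel) \<partial>lborel_Pi n)"
    unfolding H_def dilate_fun_upd ..
  also have "\<dots> = (\<integral>\<^sup>+ x. h (dilate (Suc n) t x) \<partial>lborel_Pi (Suc n))"
    unfolding lessThan_Suc by (rule product_nn_integral_insert[symmetric]) auto
  finally show ?case using t by (simp add: ennreal_mult mult.assoc)
qed

definition lp_norm_pow :: "nat \<Rightarrow> real \<Rightarrow> (nat \<Rightarrow> real) \<Rightarrow> real" where
  "lp_norm_pow n p x = (\<Sum>i<n. \<bar>x i\<bar> powr p)"

lemma lp_norm_pow_measurable [measurable]: "lp_norm_pow n p \<in> borel_measurable (lborel_Pi n)"
  unfolding lp_norm_pow_def by measurable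

lemma lp_norm_pow_nonneg: "0 \<le> lp_norm_pow n p x"
  unfolding lp_norm_pow_def by (simp add: sum_nonneg)

lemma lp_norm_pow_dilate: "t > 0 \<Longrightarrow> lp_norm_pow n p (dilate n t x) = t powr p * lp_norm_pow n p x"
  unfolding lp_norm_pow_def dilate_def by (simp add: sum_distrib_left abs_mult powr_mult)

definition sublevel_integral :: "nat \<Rightarrow> real \<Rightarrow> ((nat \<Rightarrow> real) \<Rightarrow> ennreal) \<Rightarrow> real \<Rightarrow> ennreal" where
  "sublevel_integral n p G s = (\<integral>\<^sup>+ x. G x * indicator {x. lp_norm_pow n p x \<le> s} x \<partial>lborel_Pi n)"

lemma sublevel_integral_scale:
  assumes p: "p > 0" and s: "s > 0" and G [measurable]: "G \<in> borel_measurable (lborel_Pi n)"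
    and hom: "\<And>x t. t > 0 \<Longrightarrow> G (dilate n t x) = ennreal (t ^ m) * G x"
  shows "sublevel_integral n p G s = ennreal (s powr ((real n + real m) / p)) * sublevel_integral n p G 1"
proof -
  define t where "t = s powr (1 / p)"
  have t: "t > 0" "t powr p = s" unfolding t_def using s p by (auto simp: powr_powr)
  have "sublevel_integral n p G s
      = ennreal (t ^ n) * (\<integral>\<^sup>+ x. G (dilate n t x) * indicator {x. lp_norm_pow n p x \<le> s} (dilate n t x) \<partial>lborel_Pi n)"
    unfolding sublevel_integral_def by (rule nn_integral_dilate[OF t(1)]) measurable
  also have "(\<integral>\<^sup>+ x. G (dilate n t x) * indicator {x. lp_norm_pow n p x \<le> s} (dilate n t x) \<partial>lborel_Pi n)
      = (\<integral>\<^sup>+ x. ennreal (t ^ m) * (G x * indicator {x. lp_norm_pow n p x \<le> 1} x) \<partial>lborel_Pi n)"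
  proof (intro nn_integral_cong)
    fix x
    have "(lp_norm_pow n p (dilate n t x) \<le> s) = (lp_norm_pow n p x \<le> 1)"
      using lp_norm_pow_dilate[OF t(1)] t s by (simp add: mult_le_cancel_left1)
    then show "G (dilate n t x) * indicator {x. lp_norm_pow n p x \<le> s} (dilate n t x)
        = ennreal (t ^ m) * (G x * indicator {x. lp_norm_pow n p x \<le> 1} x)"
      using hom[OF t(1)] by (simp add: indicator_def mult.assoc)
  qed
  also have "\<dots> = ennreal (t ^ m) * sublevel_integral n p G 1"
    unfolding sublevel_integral_def by (rule nn_integral_cmult) measurable
  finally have "sublevel_integral n p G s = ennreal (t ^ n * t ^ m) * sublevel_integral n p G 1"
    using t by (simp add: ennreal_mult mult.assoc)
  also have "t ^ n * t ^ m = s powr ((real n + real m) / p)"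
    unfolding t_def using s
    by (simp add: powr_realpow[symmetric] powr_powr powr_add[symmetric] add_divide_distrib)
  finally show ?thesis .
qed

lemma ennreal_exp_neg_eq_nn_integral:
  "ennreal (exp (- a)) = (\<integral>\<^sup>+ s. ennreal (indicator {a..} s * exp (- s)) \<partial>lborel)"
proof -
  have "(\<integral>\<^sup>+ s. ennreal (indicator {0..} s * exp (- s)) \<partial>lborel)
      = (\<integral>\<^sup>+ t. ennreal (indicator {0..} t * t powr (1 - 1) / exp t) \<partial>lborel)"
    by (intro nn_integral_cong_AE, use AE_lborel_singleton[of 0] in eventually_elim)
       (auto simp: indicator_def exp_minus field_simps)
  also have "\<dots> = 1" using Gamma_conv_nn_integral_real[of 1] by simp
  finally have "(\<integral>\<^sup>+ s. ennreal (indicator {0..} s * exp (- s)) \<partial>lborel) = 1" .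
  have "(\<integral>\<^sup>+ s. ennreal (indicator {a..} s * exp (- s)) \<partial>lborel)
      = (\<integral>\<^sup>+ s. ennreal (indicator {a..} (a + 1 * s) * exp (- (a + 1 * s))) \<partial>lborel)"
    using nn_integral_real_affine[of "\<lambda>s. ennreal (indicator {a..} s * exp (- s))" 1 a] by simp
  also have "\<dots> = (\<integral>\<^sup>+ s. ennreal (exp (- a)) * ennreal (indicator {0..} s * exp (- s)) \<partial>lborel)"
    by (intro nn_integral_cong) (auto simp: indicator_def mult_exp_exp ennreal_mult[symmetric])
  also have "\<dots> = ennreal (exp (- a))"
    by (subst nn_integral_cmult) (auto simp: \<open>(\<integral>\<^sup>+ s. ennreal (indicator {0..} s * exp (- s)) \<partial>lborel) = 1\<close>)
  finally show ?thesis ..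
qed

lemma nn_integral_powr_exp_neg:
  assumes "a \<ge> 0"
  shows "(\<integral>\<^sup>+ s. ennreal (indicator {0<..} s * s powr a * exp (- s)) \<partial>lborel) = ennreal (Gamma (a + 1))"
proof -
  have "(\<integral>\<^sup>+ s. ennreal (indicator {0<..} s * s powr a * exp (- s)) \<partial>lborel)
      = (\<integral>\<^sup>+ t. ennreal (indicator {0..} t * t powr (a + 1 - 1) / exp t) \<partial>lborel)"
    by (intro nn_integral_cong) (auto simp: indicator_def exp_minus field_simps)
  then show ?thesis
    using Gamma_conv_nn_integral_real[of "a + 1"] assms by simp
qed

text \<open>Write exp(-N(x)) as the integral of exp(-s) over s \<ge> N(x) and swap the integrals: the inner
  integral is the sublevel integral at level s, which is s^((n+m)/p) times the one at level 1.\<close>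

lemma nn_integral_homogeneous_exp_neg_lp_norm_pow:
  assumes p: "p > 0" and G [measurable]: "G \<in> borel_measurable (lborel_Pi n)"
    and hom: "\<And>x t. t > 0 \<Longrightarrow> G (dilate n t x) = ennreal (t ^ m) * G x"
  shows "(\<integral>\<^sup>+ x. G x * ennreal (exp (- lp_norm_pow n p x)) \<partial>lborel_Pi n)
       = ennreal (Gamma ((real n + real m) / p + 1)) * sublevel_integral n p G 1"
proof -
  interpret finite_product_sigma_finite "\<lambda>_::nat. lborel :: real measure" "{..<n}" by standard auto
  interpret pair_sigma_finite "lborel_Pi n" lborel by standard
  define a where "a = (real n + real m) / p"
  have a: "a \<ge> 0" unfolding a_def using p by simp
  have "(\<lambda>(x, s). G x * ennreal ((if lp_norm_pow n p x \<le> s then 1 else 0) * exp (- s)))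
      \<in> borel_measurable (lborel_Pi n \<Otimes>\<^sub>M lborel)"
    by measurable
  then have [measurable]: "(\<lambda>(x, s). G x * ennreal (indicator {lp_norm_pow n p x..} s * exp (- s)))
      \<in> borel_measurable (lborel_Pi n \<Otimes>\<^sub>M lborel)"
    by (simp add: indicator_def case_prod_beta')
  have slice: "(\<integral>\<^sup>+ x. G x * ennreal (indicator {lp_norm_pow n p x..} s * exp (- s)) \<partial>lborel_Pi n)
      = ennreal (indicator {0<..} s * s powr a * exp (- s)) * sublevel_integral n p G 1" if "s \<noteq> 0" for s
  proof -
    have "(\<integral>\<^sup>+ x. G x * ennreal (indicator {lp_norm_pow n p x..} s * exp (- s)) \<partial>lborel_Pi n)
        = ennreal (exp (- s)) * sublevel_integral n p G s"
      unfolding sublevel_integral_def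
      by (subst nn_integral_cmult[symmetric], measurable) (auto intro!: nn_integral_cong simp: indicator_def mult.commute)
    also have "\<dots> = ennreal (indicator {0<..} s * s powr a * exp (- s)) * sublevel_integral n p G 1"
    proof (cases "s > 0")
      case True
      then show ?thesis using sublevel_integral_scale[OF p True G hom] unfolding a_def
        by (simp add: ennreal_mult mult_ac)
    next
      case False
      with that have "s < 0" by simp
      then have "{x. lp_norm_pow n p x \<le> s} = {}"
        using lp_norm_pow_nonneg[of n p] by (auto simp: not_le intro: less_le_trans)
      then show ?thesis using False unfolding sublevel_integral_def by simp
    qed
    finally show ?thesis .
  qed
  have "(\<integral>\<^sup>+ x. G x * ennreal (exp (- lp_norm_pow n p x)) \<partial>lborel_Pi n)
      = (\<integral>\<^sup>+ x. (\<integral>\<^sup>+ s. G x * ennreal (indicator {lp_norm_pow n p x..} s * exp (- s)) \<partial>lborel) \<partial>lborel_Pi n)"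
    by (intro nn_integral_cong) (simp add: ennreal_exp_neg_eq_nn_integral nn_integral_cmult)
  also have "\<dots> = (\<integral>\<^sup>+ s. (\<integral>\<^sup>+ x. G x * ennreal (indicator {lp_norm_pow n p x..} s * exp (- s)) \<partial>lborel_Pi n) \<partial>lborel)"
    by (rule Fubini'[symmetric]) measurable
  also have "\<dots> = (\<integral>\<^sup>+ s. ennreal (indicator {0<..} s * s powr a * exp (- s)) * sublevel_integral n p G 1 \<partial>lborel)"
    by (intro nn_integral_cong_AE, use AE_lborel_singleton[of 0] in eventually_elim) (simp add: slice)
  also have "\<dots> = ennreal (Gamma (a + 1)) * sublevel_integral n p G 1"
    by (subst nn_integral_multc) (auto simp: nn_integral_powr_exp_neg[OF a])
  finally show ?thesis unfolding a_def .
qed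

section \<open>A ratio of Gamma values\<close>

lemma Gamma_add_le_powr_mult:
  fixes x b :: real
  assumes x: "x > 0" and b: "0 \<le> b" "b \<le> 1"
  shows "Gamma (x + b) \<le> x powr b * Gamma x"
proof -
  have "(ln \<circ> Gamma) ((1 - b) *\<^sub>R x + b *\<^sub>R (x + 1)) \<le> (1 - b) * (ln \<circ> Gamma) x + b * (ln \<circ> Gamma) (x + 1)"
    by (rule convex_onD[OF log_convex_Gamma_real]) (use x b in auto)
  moreover have "(1 - b) *\<^sub>R x + b *\<^sub>R (x + 1) = x + b" by (simp add: algebra_simps)
  moreover have "Gamma (x + 1) = x * Gamma x" using Gamma_plus1[of x] x nonpos_Ints_nonpos[of x] by auto
  moreover have "Gamma x \<noteq> 0" using Gamma_real_pos[OF x] by simp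
  ultimately have "ln (Gamma (x + b)) \<le> ln (Gamma x) + b * ln x"
    using x by (simp add: ln_mult algebra_simps)
  then have "exp (ln (Gamma (x + b))) \<le> exp (ln (Gamma x) + b * ln x)" by simp
  moreover have "Gamma (x + b) > 0" using x b by (intro Gamma_real_pos) auto
  ultimately show ?thesis using Gamma_real_pos[OF x] x by (simp add: exp_add powr_def mult.commute)
qed

lemma Gamma_add_le:
  fixes x b :: real
  assumes x: "x > 0" and b: "0 \<le> b"
  shows "Gamma (x + b) \<le> (x + b) powr b * Gamma x"
proof -
  have bounded: "\<forall>b. 0 \<le> b \<longrightarrow> b \<le> real k + 1 \<longrightarrow> Gamma (x + b) \<le> (x + b) powr b * Gamma x" for k
  proof (induction k)
    case 0
    show ?case
    proof (intro allI impI)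
      fix b :: real assume b: "0 \<le> b" "b \<le> real 0 + 1"
      have "Gamma (x + b) \<le> x powr b * Gamma x" using Gamma_add_le_powr_mult[OF x] b by simp
      also have "\<dots> \<le> (x + b) powr b * Gamma x"
        using x b Gamma_real_pos[OF x] by (intro mult_right_mono powr_mono2) auto
      finally show "Gamma (x + b) \<le> (x + b) powr b * Gamma x" .
    qed
  next
    case (Suc k)
    show ?case
    proof (intro allI impI)
      fix b :: real assume b: "0 \<le> b" "b \<le> real (Suc k) + 1"
      show "Gamma (x + b) \<le> (x + b) powr b * Gamma x"
      proof (cases "b \<le> real k + 1")
        case False
        then have b1: "b \<ge> 1" by simp
        have "Gamma (x + b) = (x + (b - 1)) * Gamma (x + (b - 1))"
          using Gamma_plus1[of "x + (b - 1)"] x b1 nonpos_Ints_nonpos[of "x + (b - 1)"] by auto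
        also have "\<dots> \<le> (x + (b - 1)) * ((x + (b - 1)) powr (b - 1) * Gamma x)"
          using Suc.IH x b b1 by (intro mult_left_mono) auto
        also have "\<dots> = (x + (b - 1)) powr b * Gamma x"
          using x b1 by (simp add: powr_diff field_simps)
        also have "\<dots> \<le> (x + b) powr b * Gamma x"
          using x b1 Gamma_real_pos[OF x] by (intro mult_right_mono powr_mono2) auto
        finally show ?thesis .
      qed (use Suc.IH b in blast)
    qed
  qed
  moreover have "b \<le> real (nat \<lceil>b\<rceil>) + 1" using real_nat_ceiling_ge[of b] by linarith
  ultimately show ?thesis using b by blast
qed

lemma Gamma_ratio_ge:
  assumes p: "p \<ge> 1" and n: "real n \<ge> 1" and dn: "real d \<le> real n"
  shows "real n powr (- 2 * real d / p) / 16 ^ d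
    \<le> Gamma (real n / p + 1) / Gamma ((real n + real (2 * d)) / p + 1)"
proof -
  define x where "x = real n / p + 1"
  define b where "b = 2 * real d / p"
  have x: "x > 0" unfolding x_def using p by (intro add_nonneg_pos divide_nonneg_nonneg) auto
  have b: "0 \<le> b" "b \<le> 2 * real d" unfolding b_def using p
    by (auto simp: field_simps intro: order_trans[OF _ mult_right_mono[of 1 p "real d"]])
  have xb: "x + b = (real n + real (2 * d)) / p + 1" unfolding x_def b_def using p by (simp add: field_simps)
  have "x + b \<le> 4 * real n"
  proof -
    have "real n + 2 * real d + p \<le> 4 * real n * p"
      using n p dn mult_left_mono[of 1 p "real n"] mult_right_mono[of 1 "real n" p] by linarith
    moreover have "x + b = (real n + 2 * real d + p) / p" unfolding x_def b_def using p by (simp add: field_simps)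
    ultimately show ?thesis using p by (simp add: divide_le_eq mult.commute mult.left_commute)
  qed
  then have "(x + b) powr b \<le> 4 powr b * real n powr b"
    using x b n powr_mono2[of b "x + b" "4 * real n"] by (simp add: powr_mult)
  also have "\<dots> \<le> 4 powr (2 * real d) * real n powr b"
    using b by (intro mult_right_mono powr_mono) auto
  also have "(4::real) powr (2 * real d) = 16 ^ d"
    by (simp add: powr_realpow[of 4 "2 * d", simplified] power_mult)
  finally have A: "(x + b) powr b \<le> 16 ^ d * real n powr b" .
  have "real n powr (- 2 * real d / p) / 16 ^ d = 1 / (16 ^ d * real n powr b)"
    unfolding b_def using n by (simp add: powr_minus divide_simps)
  also have "\<dots> \<le> 1 / ((x + b) powr b)"
    using A n x b by (intro divide_left_mono mult_pos_pos) auto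
  also have "\<dots> \<le> Gamma x / Gamma (x + b)"
    using Gamma_add_le[OF x b(1)] Gamma_real_pos[OF x] Gamma_real_pos[of "x + b"] x b
    by (simp add: divide_simps mult.commute)
  finally show ?thesis unfolding xb by (simp add: x_def)
qed

section \<open>The uniform distribution on the l_p ball\<close>

lemma lp_ball_eq:
  assumes p: "p \<ge> 1"
  shows "lp_ball n p = {x \<in> space (lborel_Pi n). lp_norm_pow n p x \<le> 1}"
proof -
  have "lp_norm n p x \<le> 1 \<longleftrightarrow> lp_norm_pow n p x \<le> 1" for x
    using lp_norm_pow_nonneg[of n p x] p powr_le1[of "1 / p" "lp_norm_pow n p x"]
      powr_less_mono2[of "1 / p" 1 "lp_norm_pow n p x"]
    unfolding lp_norm_def lp_norm_pow_def[symmetric] by (auto simp: not_le[symmetric])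
  then show ?thesis unfolding lp_ball_def Rn_measure_def by simp
qed

lemma hom_poly_measurable [measurable]: "hom_poly n d \<alpha> \<in> borel_measurable (lborel_Pi n)"
  unfolding hom_poly_def by measurable

lemma hom_poly_dilate:
  assumes "t > 0"
  shows "hom_poly n d \<alpha> (dilate n t x) = t ^ d * hom_poly n d \<alpha> x"
proof -
  have "(\<Prod>i<n. dilate n t x i ^ I i) = t ^ d * (\<Prod>i<n. x i ^ I i)" if "I \<in> multi_idx n d" for I
  proof -
    have "(\<Prod>i<n. dilate n t x i ^ I i) = (\<Prod>i<n. t ^ I i) * (\<Prod>i<n. x i ^ I i)"
      unfolding dilate_def prod.distrib[symmetric] by (intro prod.cong) (auto simp: power_mult_distrib)
    then show ?thesis using that by (simp add: power_sum[symmetric] multi_idx_def)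
  qed
  then show ?thesis unfolding hom_poly_def by (simp add: sum_distrib_left mult_ac)
qed

lemma abs_hom_poly_le_on_lp_ball:
  assumes p: "p \<ge> 1" and x: "lp_norm_pow n p x \<le> 1"
  shows "\<bar>hom_poly n d \<alpha> x\<bar> \<le> (\<Sum>I\<in>multi_idx n d. \<bar>\<alpha> I\<bar>)"
proof -
  have "\<bar>x i\<bar> \<le> 1" if "i < n" for i
  proof (rule ccontr)
    assume "\<not> \<bar>x i\<bar> \<le> 1"
    then have "1 < \<bar>x i\<bar> powr p" using p powr_less_mono2[of p 1 "\<bar>x i\<bar>"] by simp
    moreover have "\<bar>x i\<bar> powr p \<le> lp_norm_pow n p x"
      unfolding lp_norm_pow_def using that by (intro member_le_sum) auto
    ultimately show False using x by simp
  qed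
  then have "\<bar>\<alpha> I * (\<Prod>i<n. x i ^ I i)\<bar> \<le> \<bar>\<alpha> I\<bar>" for I
    by (auto simp: abs_mult abs_prod power_abs intro!: mult_left_le prod_le_1 power_le_one)
  then show ?thesis unfolding hom_poly_def by (intro order.trans[OF sum_abs] sum_mono)
qed

lemma exp_neg_lp_norm_pow:
  assumes p: "p \<ge> 1"
  shows "exp (- lp_norm_pow n p x) = pgauss_const p ^ n * (\<Prod>i<n. pgauss p (x i))"
proof -
  have "exp (- lp_norm_pow n p x) = (\<Prod>i<n. pgauss_const p * pgauss p (x i))"
    unfolding lp_norm_pow_def pgauss_def using pgauss_const_pos[OF p]
    by (simp add: exp_sum[symmetric] sum_negf)
  then show ?thesis by (simp add: prod.distrib)
qed

lemma nn_integral_exp_neg_lp_norm_pow: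
  assumes p: "p \<ge> 1"
  shows "(\<integral>\<^sup>+ x. ennreal (exp (- lp_norm_pow n p x)) \<partial>lborel_Pi n) = ennreal (pgauss_const p ^ n)"
proof -
  interpret product_sigma_finite "\<lambda>_::nat. lborel :: real measure" by standard
  have "(\<integral>\<^sup>+ x. ennreal (exp (- lp_norm_pow n p x)) \<partial>lborel_Pi n)
      = (\<integral>\<^sup>+ x. (\<Prod>i<n. ennreal (exp (- (\<bar>x i\<bar> powr p)))) \<partial>lborel_Pi n)"
    unfolding lp_norm_pow_def
    by (intro nn_integral_cong) (simp add: exp_sum[symmetric] sum_negf prod_ennreal)
  also have "\<dots> = (\<Prod>i<n. (\<integral>\<^sup>+ y. ennreal (exp (- (\<bar>y\<bar> powr p))) \<partial>lborel))"
    by (rule product_nn_integral_prod) auto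
  finally show ?thesis
    using pgauss_const_pos[OF p] by (simp add: nn_integral_exp_neg_powr[OF p] prod_ennreal ennreal_power)
qed

lemma nn_integral_hom_poly_sq_exp_neg_ge:
  assumes p: "p \<ge> 1"
  shows "ennreal (pgauss_const p ^ n * (monic_bound d ^ d * (coeff_d n d \<alpha>)\<^sup>2))
    \<le> (\<integral>\<^sup>+ x. ennreal ((hom_poly n d \<alpha> x)\<^sup>2) * ennreal (exp (- lp_norm_pow n p x)) \<partial>lborel_Pi n)"
proof -
  obtain e where e: "\<And>k j. k < j \<Longrightarrow> e k j = 0" "\<And>j. j \<le> d \<Longrightarrow> e j j = 1"
    "\<And>D A. D \<le> d \<Longrightarrow> (\<Sum>j\<le>D. monic_bound d ^ j * (\<Sum>k\<le>D. e k j * A k)\<^sup>2)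
        \<le> (\<integral>y. (\<Sum>k\<le>D. y ^ k * A k)\<^sup>2 * pgauss p y \<partial>lborel)"
    using pgauss_poly_sq_integral_ge_triangular[OF p] by blast
  define \<beta> where "\<beta> I = (if I \<in> multi_idx n d then \<alpha> I else 0)" for I
  have int: "integrable lborel (\<lambda>y. (\<Sum>k\<le>D. y ^ k * A k)\<^sup>2 * pgauss p y)" for D A
  proof -
    have "(\<Sum>k\<le>D. y ^ k * A k)\<^sup>2 = poly ((\<Sum>k\<le>D. monom (A k) k) ^ 2) y" for y
      by (simp add: poly_power poly_sum poly_monom mult.commute)
    then show ?thesis using integrable_poly_pgauss[OF p] by presburger
  qed
  have "(\<Sum>I\<in>multi_idx n d. (\<beta> I)\<^sup>2) = (coeff_d n d \<alpha>)\<^sup>2"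
    unfolding coeff_d_def \<beta>_def by (simp add: sum_nonneg)
  then have "ennreal (monic_bound d ^ d * (coeff_d n d \<alpha>)\<^sup>2)
      \<le> (\<integral>\<^sup>+ x. ennreal ((mpoly n d \<beta> x)\<^sup>2 * (\<Prod>i<n. pgauss p (x i))) \<partial>lborel_Pi n)"
    using nn_integral_mpoly_sq_density_ge[OF _ pgauss_nonneg[OF p] int _ monic_bound_le_1 e,
        where n=n and \<beta>=\<beta> and D=d] monic_bound_pos[of d]
    by simp
  then have "ennreal (pgauss_const p ^ n) * ennreal (monic_bound d ^ d * (coeff_d n d \<alpha>)\<^sup>2)
      \<le> (\<integral>\<^sup>+ x. ennreal (pgauss_const p ^ n) * ennreal ((mpoly n d \<beta> x)\<^sup>2 * (\<Prod>i<n. pgauss p (x i))) \<partial>lborel_Pi n)"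
    by (subst nn_integral_cmult) (auto intro: mult_left_mono)
  also have "\<dots> = (\<integral>\<^sup>+ x. ennreal ((hom_poly n d \<alpha> x)\<^sup>2) * ennreal (exp (- lp_norm_pow n p x)) \<partial>lborel_Pi n)"
    using pgauss_const_pos[OF p] pgauss_nonneg[OF p]
    by (intro nn_integral_cong)
       (simp add: exp_neg_lp_norm_pow[OF p] hom_poly_eq_mpoly[of n d \<alpha>, folded \<beta>_def] ennreal_mult'[symmetric] prod_nonneg mult_ac)
  finally show ?thesis
    using pgauss_const_pos[OF p] by (simp add: ennreal_mult')
qed

lemma sublevel_integral_eq_lp_ball:
  "p \<ge> 1 \<Longrightarrow> sublevel_integral n p G 1 = (\<integral>\<^sup>+ x. G x * indicator (lp_ball n p) x \<partial>lborel_Pi n)"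
  unfolding sublevel_integral_def lp_ball_eq by (intro nn_integral_cong) (auto simp: indicator_def)

lemma lp_ball_sets [measurable]: "p \<ge> 1 \<Longrightarrow> lp_ball n p \<in> sets (lborel_Pi n)"
  unfolding lp_ball_eq by measurable

lemma emeasure_lp_ball:
  assumes p: "p \<ge> 1"
  shows "ennreal (Gamma (real n / p + 1)) * emeasure (lborel_Pi n) (lp_ball n p) = ennreal (pgauss_const p ^ n)"
proof -
  have "(\<integral>\<^sup>+ x. 1 * ennreal (exp (- lp_norm_pow n p x)) \<partial>lborel_Pi n)
      = ennreal (Gamma ((real n + real 0) / p + 1)) * sublevel_integral n p (\<lambda>_. 1) 1"
    using p by (intro nn_integral_homogeneous_exp_neg_lp_norm_pow) auto
  then show ?thesis
    using p by (simp add: nn_integral_exp_neg_lp_norm_pow sublevel_integral_eq_lp_ball)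
qed

lemma emeasure_lp_ball_finite:
  assumes p: "p \<ge> 1"
  shows "emeasure (lborel_Pi n) (lp_ball n p) < \<infinity>"
proof -
  have "Gamma (real n / p + 1) > 0" using p by (intro Gamma_real_pos add_nonneg_pos) auto
  then show ?thesis
    using emeasure_lp_ball[OF p, of n] by (cases "emeasure (lborel_Pi n) (lp_ball n p)") (auto simp: ennreal_mult_top)
qed

lemma nn_integral_lp_ball_hom_poly_sq_finite:
  assumes p: "p \<ge> 1"
  shows "(\<integral>\<^sup>+ x. ennreal ((hom_poly n d \<alpha> x)\<^sup>2) * indicator (lp_ball n p) x \<partial>lborel_Pi n) < \<infinity>"
proof -
  have "(\<integral>\<^sup>+ x. ennreal ((hom_poly n d \<alpha> x)\<^sup>2) * indicator (lp_ball n p) x \<partial>lborel_Pi n)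
      \<le> (\<integral>\<^sup>+ x. ennreal ((\<Sum>I\<in>multi_idx n d. \<bar>\<alpha> I\<bar>)\<^sup>2) * indicator (lp_ball n p) x \<partial>lborel_Pi n)"
    by (intro nn_integral_mono)
       (auto simp: lp_ball_eq[OF p] indicator_def abs_le_square_iff[symmetric] abs_hom_poly_le_on_lp_ball[OF p]
             intro!: ennreal_leI order.trans[OF _ abs_ge_self])
  also have "\<dots> < \<infinity>"
    using emeasure_lp_ball_finite[OF p]
    by (subst nn_integral_cmult_indicator[OF lp_ball_sets[OF p]]) (simp add: ennreal_mult_less_top)
  finally show ?thesis .
qed

lemma nn_integral_lp_ball_hom_poly_sq_ge:
  assumes p: "p \<ge> 1"
  shows "ennreal (pgauss_const p ^ n * (monic_bound d ^ d * (coeff_d n d \<alpha>)\<^sup>2))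
    \<le> ennreal (Gamma ((real n + real (2 * d)) / p + 1))
        * (\<integral>\<^sup>+ x. ennreal ((hom_poly n d \<alpha> x)\<^sup>2) * indicator (lp_ball n p) x \<partial>lborel_Pi n)"
proof -
  have "ennreal ((hom_poly n d \<alpha> (dilate n t x))\<^sup>2) = ennreal (t ^ (2 * d)) * ennreal ((hom_poly n d \<alpha> x)\<^sup>2)"
    if "t > 0" for t x
    unfolding hom_poly_dilate[OF that] using that
    by (simp add: ennreal_mult[symmetric] power_mult_distrib power_mult[symmetric] mult.commute)
  then have "(\<integral>\<^sup>+ x. ennreal ((hom_poly n d \<alpha> x)\<^sup>2) * ennreal (exp (- lp_norm_pow n p x)) \<partial>lborel_Pi n)
      = ennreal (Gamma ((real n + real (2 * d)) / p + 1))
        * (\<integral>\<^sup>+ x. ennreal ((hom_poly n d \<alpha> x)\<^sup>2) * indicator (lp_ball n p) x \<partial>lborel_Pi n)"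
    unfolding sublevel_integral_eq_lp_ball[OF p, symmetric] using p
    by (intro nn_integral_homogeneous_exp_neg_lp_norm_pow) auto
  with nn_integral_hom_poly_sq_exp_neg_ge[OF p, of n d \<alpha>] show ?thesis by (rule ord_le_eq_trans)
qed

lemma lp_ball_moment_ge:
  assumes p: "p \<ge> 1"
  shows "Gamma (real n / p + 1) / Gamma ((real n + real (2 * d)) / p + 1) * (monic_bound d ^ d * (coeff_d n d \<alpha>)\<^sup>2)
    \<le> (\<integral>x. (hom_poly n d \<alpha> x)\<^sup>2 \<partial>uniform_measure (Rn_measure n) (lp_ball n p))"
proof -
  define f where "f = hom_poly n d \<alpha>"
  define \<Gamma>1 where "\<Gamma>1 = Gamma (real n / p + 1)"
  define \<Gamma>2 where "\<Gamma>2 = Gamma ((real n + real (2 * d)) / p + 1)"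
  define Z where "Z = pgauss_const p ^ n"
  define c where "c = monic_bound d ^ d * (coeff_d n d \<alpha>)\<^sup>2"
  have pos: "\<Gamma>1 > 0" "\<Gamma>2 > 0" "Z > 0"
    unfolding \<Gamma>1_def \<Gamma>2_def Z_def using p pgauss_const_pos[OF p] by (auto intro!: Gamma_real_pos add_nonneg_pos)
  have [measurable]: "f \<in> borel_measurable (lborel_Pi n)" unfolding f_def by measurable
  obtain v where v: "emeasure (lborel_Pi n) (lp_ball n p) = ennreal v" "\<Gamma>1 * v = Z" "v > 0"
  proof -
    have "ennreal \<Gamma>1 * emeasure (lborel_Pi n) (lp_ball n p) = ennreal Z"
      unfolding \<Gamma>1_def Z_def by (rule emeasure_lp_ball[OF p])
    then show ?thesis using pos that[of "Z / \<Gamma>1"]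
      by (cases "emeasure (lborel_Pi n) (lp_ball n p)") (auto simp: ennreal_mult'[symmetric] field_simps)
  qed
  define S where "S = (\<integral>\<^sup>+ x. ennreal ((f x)\<^sup>2) * indicator (lp_ball n p) x \<partial>lborel_Pi n)"
  have "S < \<infinity>" unfolding S_def f_def by (rule nn_integral_lp_ball_hom_poly_sq_finite[OF p])
  then obtain s where s: "S = ennreal s" "s \<ge> 0" by (cases S) auto
  have "ennreal (Z * c) \<le> ennreal (\<Gamma>2 * s)"
    using nn_integral_lp_ball_hom_poly_sq_ge[OF p, of n d \<alpha>] s pos unfolding S_def f_def Z_def c_def \<Gamma>2_def
    by (simp add: ennreal_mult)
  then have Zc: "Z * c \<le> \<Gamma>2 * s" using s pos by (simp add: ennreal_le_iff)
  have "(\<integral>x. (f x)\<^sup>2 \<partial>uniform_measure (lborel_Pi n) (lp_ball n p))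
      = enn2real (\<integral>\<^sup>+ x. ennreal ((f x)\<^sup>2) \<partial>uniform_measure (lborel_Pi n) (lp_ball n p))"
    by (intro integral_eq_nn_integral, subst measurable_cong_sets[OF sets_uniform_measure refl]) auto
  also have "\<dots> = s / v"
    using p v s by (simp add: nn_integral_uniform_measure S_def[symmetric] divide_ennreal)
  finally have E: "(\<integral>x. (f x)\<^sup>2 \<partial>uniform_measure (lborel_Pi n) (lp_ball n p)) = s / v" .
  have "\<Gamma>1 / \<Gamma>2 * c = \<Gamma>1 * (Z * c) / (\<Gamma>2 * Z)" using pos by (simp add: field_simps)
  also have "\<dots> \<le> \<Gamma>1 * (\<Gamma>2 * s) / (\<Gamma>2 * Z)"
    using Zc pos by (intro divide_right_mono mult_left_mono) auto
  also have "\<dots> = s / v" using v pos by (simp add: field_simps)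
  finally show ?thesis unfolding E[unfolded f_def] Rn_measure_def \<Gamma>1_def \<Gamma>2_def c_def .
qed

theorem lemma4p3:
  fixes d :: nat
  shows "\<exists>C>0. \<forall>(p::real) (n::nat) (\<alpha>::(nat \<Rightarrow> nat) \<Rightarrow> real).
           p \<ge> 1 \<longrightarrow> real n > 16 * (real d)\<^sup>2 \<longrightarrow>
           (\<integral>x. (hom_poly n d \<alpha> x)\<^sup>2 \<partial>(uniform_measure (Rn_measure n) (lp_ball n p)))
             \<ge> C * real n powr (- 2 * real d / p) * (coeff_d n d \<alpha>)\<^sup>2"
proof (intro exI[of _ "monic_bound d ^ d / 16 ^ d"] conjI allI impI)
  show "monic_bound d ^ d / 16 ^ d > 0" using monic_bound_pos[of d] by simp
  fix p :: real and n :: nat and \<alpha> :: "(nat \<Rightarrow> nat) \<Rightarrow> real"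
  assume p: "p \<ge> 1" and large: "real n > 16 * (real d)\<^sup>2"
  have "n \<noteq> 0" using large zero_le_power2[of "real d"] by (intro notI) simp
  moreover have "real d \<le> (real d)\<^sup>2" by (cases "d = 0") (auto simp: power2_eq_square)
  ultimately have n: "real n \<ge> 1" "real d \<le> real n"
    using large zero_le_power2[of "real d"] by linarith+
  have "monic_bound d ^ d / 16 ^ d * real n powr (- 2 * real d / p) * (coeff_d n d \<alpha>)\<^sup>2
      = real n powr (- 2 * real d / p) / 16 ^ d * (monic_bound d ^ d * (coeff_d n d \<alpha>)\<^sup>2)"
    by simp
  also have "\<dots> \<le> Gamma (real n / p + 1) / Gamma ((real n + real (2 * d)) / p + 1)
      * (monic_bound d ^ d * (coeff_d n d \<alpha>)\<^sup>2)"
    using Gamma_ratio_ge[OF p n] monic_bound_pos[of d] by (intro mult_right_mono) auto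
  also have "\<dots> \<le> (\<integral>x. (hom_poly n d \<alpha> x)\<^sup>2 \<partial>(uniform_measure (Rn_measure n) (lp_ball n p)))"
    by (rule lp_ball_moment_ge[OF p])
  finally show "monic_bound d ^ d / 16 ^ d * real n powr (- 2 * real d / p) * (coeff_d n d \<alpha>)\<^sup>2
      \<le> (\<integral>x. (hom_poly n d \<alpha> x)\<^sup>2 \<partial>(uniform_measure (Rn_measure n) (lp_ball n p)))" .
qed

end
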